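(* Let $\mathbb{F}$ be a field, $p,q\in\mathbb{F}[t]$ monic of degree $2$, and $\mathcal{W}_{p,q}=\mathbb{F}\langle a,b\rangle/(p(a),q(b))$. Let $\Phi$ be an injective endomorphism of the $\mathbb{F}$-algebra $\mathcal{W}_{p,q}$. Then $\Phi(x^\star)=\Phi(x)^\star$ for all $x\in\mathcal{W}_{p,q}$.
   Context: $\mathcal{W}_{p,q}$ is the free associative unital $\mathbb{F}$-algebra on two generators modulo the ideal generated by $p(a),q(b)$. For a $2$-dimensional algebra set $x^\star=\mathrm{tr}(x)-x$; the adjunction $x\mapsto x^\star$ of $\mathcal{W}_{p,q}$ is the unique $\mathbb{F}$-linear anti-automorphism agreeing with this on $\mathbb{F}[a]$ and $\mathbb{F}[b]$ (so $a^\star=\mathrm{tr}(p)-a$, $b^\star=\mathrm{tr}(q)-b$, with $\mathrm{tr}(p)$ minus the coefficient of $t$ in $p$). *)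

theory Defs
  imports "HOL-Algebra.QuotRing" "HOL-Computational_Algebra.Polynomial"
begin

text \<open>Words over the alphabet {a,b} are encoded as bool lists (False = a, True = b);
  an element is a finitely supported function from words to coefficients.\<close>

definition fa_mult :: "(bool list \<Rightarrow> 'f::field) \<Rightarrow> (bool list \<Rightarrow> 'f) \<Rightarrow> bool list \<Rightarrow> 'f" where
  "fa_mult f g w = (\<Sum>i\<le>length w. f (take i w) * g (drop i w))"

definition FreeAlg :: "(bool list \<Rightarrow> 'f::field) ring" where
  "FreeAlg = \<lparr>carrier = {f. finite {w. f w \<noteq> 0}},
              monoid.mult = fa_mult,
              one = (\<lambda>w. if w = [] then 1 else 0),
              zero = (\<lambda>w. 0),
              add = (\<lambda>f g w. f w + g w)\<rparr>"

definition fa_smult :: "'f::field \<Rightarrow> (bool list \<Rightarrow> 'f) \<Rightarrow> bool list \<Rightarrow> 'f" where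
  "fa_smult c f = (\<lambda>w. c * f w)"

definition fa_scalar :: "'f::field \<Rightarrow> bool list \<Rightarrow> 'f" where
  "fa_scalar c = fa_smult c \<one>\<^bsub>FreeAlg\<^esub>"

definition gen_a :: "bool list \<Rightarrow> 'f::field" where
  "gen_a = (\<lambda>w. if w = [False] then 1 else 0)"

definition gen_b :: "bool list \<Rightarrow> 'f::field" where
  "gen_b = (\<lambda>w. if w = [True] then 1 else 0)"

definition fa_eval :: "'f::field poly \<Rightarrow> (bool list \<Rightarrow> 'f) \<Rightarrow> bool list \<Rightarrow> 'f" where
  "fa_eval p x = (\<lambda>w. \<Sum>i\<le>degree p. Polynomial.coeff p i * (x [^]\<^bsub>FreeAlg\<^esub> i) w)"

definition W_ideal :: "'f::field poly \<Rightarrow> 'f poly \<Rightarrow> (bool list \<Rightarrow> 'f) set" where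
  "W_ideal p q = genideal FreeAlg {fa_eval p gen_a, fa_eval q gen_b}"

definition W :: "'f::field poly \<Rightarrow> 'f poly \<Rightarrow> (bool list \<Rightarrow> 'f) set ring" where
  "W p q = FreeAlg Quot (W_ideal p q)"

definition W_scalar :: "'f::field poly \<Rightarrow> 'f poly \<Rightarrow> 'f \<Rightarrow> (bool list \<Rightarrow> 'f) set" where
  "W_scalar p q c = W_ideal p q +>\<^bsub>FreeAlg\<^esub> fa_scalar c"

definition W_smult :: "'f::field poly \<Rightarrow> 'f poly \<Rightarrow> 'f \<Rightarrow> (bool list \<Rightarrow> 'f) set \<Rightarrow> (bool list \<Rightarrow> 'f) set" where
  "W_smult p q c X = W_scalar p q c \<otimes>\<^bsub>W p q\<^esub> X"

definition W_alg_endo :: "'f::field poly \<Rightarrow> 'f poly \<Rightarrow> ((bool list \<Rightarrow> 'f) set \<Rightarrow> (bool list \<Rightarrow> 'f) set) \<Rightarrow> bool" where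
  "W_alg_endo p q \<Phi> \<longleftrightarrow> \<Phi> \<in> ring_hom (W p q) (W p q) \<and>
     (\<forall>c. \<forall>X\<in>carrier (W p q). \<Phi> (W_smult p q c X) = W_smult p q c (\<Phi> X))"

definition tr :: "'f::field poly \<Rightarrow> 'f" where
  "tr p = - Polynomial.coeff p 1"

text \<open>Adjunction on the free algebra: the F-linear anti-automorphism with
  a |-> tr(p) - a, b |-> tr(q) - b.  On a word x1...xn it gives xn* ... x1*.\<close>
definition gen_star :: "'f::field poly \<Rightarrow> 'f poly \<Rightarrow> bool \<Rightarrow> bool list \<Rightarrow> 'f" where
  "gen_star p q x = (if x then fa_scalar (tr q) \<ominus>\<^bsub>FreeAlg\<^esub> gen_b
                          else fa_scalar (tr p) \<ominus>\<^bsub>FreeAlg\<^esub> gen_a)"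

definition word_star :: "'f::field poly \<Rightarrow> 'f poly \<Rightarrow> bool list \<Rightarrow> bool list \<Rightarrow> 'f" where
  "word_star p q w = foldr (\<lambda>x r. r \<otimes>\<^bsub>FreeAlg\<^esub> gen_star p q x) w \<one>\<^bsub>FreeAlg\<^esub>"

definition fa_star :: "'f::field poly \<Rightarrow> 'f poly \<Rightarrow> (bool list \<Rightarrow> 'f) \<Rightarrow> bool list \<Rightarrow> 'f" where
  "fa_star p q f = finsum FreeAlg (\<lambda>w. fa_smult (f w) (word_star p q w)) {w. f w \<noteq> 0}"

text \<open>Induced adjunction on W (it is well defined since p(tr p - a) = p(a) etc.).\<close>
definition W_star :: "'f::field poly \<Rightarrow> 'f poly \<Rightarrow> (bool list \<Rightarrow> 'f) set \<Rightarrow> (bool list \<Rightarrow> 'f) set" where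
  "W_star p q X = W_ideal p q +>\<^bsub>FreeAlg\<^esub> fa_star p q (SOME r. r \<in> X)"

end

theory Submission
  imports Defs
begin

(* Sending a to the companion matrix of p and b to a suitable root of q in the 2x2 matrices
   over F[X] gives a representation psi of W_{p,q}. It is faithful: W_{p,q} is spanned by
   1, a, b, ab over the polynomials in the central element c = ab + ba + q1 a + p1 b, the
   images of 1, a, b, ab are linearly independent over F[X], and c goes to a scalar of
   degree 2. Under psi the adjunction becomes the adjugate M |-> tr(M) - M.
   If Phi is an injective endomorphism, psi(Phi(a)) is a root of p which is not a constant
   scalar, so its trace is tr(p), and likewise for b. Hence psi o Phi, like psi, turns the
   adjunction into the adjugate, and faithfulness of psi gives Phi(x^star) = Phi(x)^star. *)

section \<open>The free algebra\<close>

definition splits :: "'a list \<Rightarrow> ('a list \<times> 'a list) set" where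
  "splits w = {(u, v). u @ v = w}"

lemma splits_eq_image: "splits w = (\<lambda>i. (take i w, drop i w)) ` {..length w}"
proof
  show "splits w \<subseteq> (\<lambda>i. (take i w, drop i w)) ` {..length w}"
  proof
    fix x assume "x \<in> splits w"
    then obtain u v where "x = (u, v)" "w = u @ v" by (auto simp: splits_def)
    then show "x \<in> (\<lambda>i. (take i w, drop i w)) ` {..length w}"
      by (auto intro!: image_eqI[where x="length u"])
  qed
qed (auto simp: splits_def)

lemma finite_splits [simp]: "finite (splits w)"
  by (simp add: splits_eq_image)

lemma fa_mult_splits: "fa_mult f g w = (\<Sum>(u, v)\<in>splits w. f u * g v)"
proof -
  have "inj_on (\<lambda>i. (take i w, drop i w)) {..length w}"
    by (auto simp: inj_on_def) (metis append_take_drop_id length_take min.absorb2)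
  then show ?thesis
    unfolding fa_mult_def splits_eq_image by (simp add: sum.reindex)
qed

lemma FreeAlg_simps:
  "carrier FreeAlg = {f. finite {w. f w \<noteq> 0}}"
  "monoid.mult FreeAlg = fa_mult"
  "one FreeAlg = (\<lambda>w. if w = [] then 1 else 0)"
  "zero FreeAlg = (\<lambda>w. 0)"
  "add FreeAlg = (\<lambda>f g w. f w + g w)"
  by (simp_all add: FreeAlg_def)

lemmas FreeAlg_carrier = FreeAlg_simps(1)

lemma fa_mult_assoc: "fa_mult (fa_mult f g) h w = fa_mult f (fa_mult g h) w"
proof -
  define T where "T = {(u, v, z). u @ v @ z = w}"
  have "fa_mult (fa_mult f g) h w
      = (\<Sum>x\<in>splits w. \<Sum>y\<in>splits (fst x). f (fst y) * g (snd y) * h (snd x))"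
    by (simp add: fa_mult_splits sum_distrib_right case_prod_unfold)
  also have "\<dots> = (\<Sum>xy\<in>Sigma (splits w) (\<lambda>x. splits (fst x)).
      f (fst (snd xy)) * g (snd (snd xy)) * h (snd (fst xy)))"
    by (subst sum.Sigma) (auto simp: case_prod_unfold)
  also have "\<dots> = (\<Sum>t\<in>T. f (fst t) * g (fst (snd t)) * h (snd (snd t)))"
    by (rule sum.reindex_bij_witness[where i="\<lambda>(u, v, z). ((u @ v, z), (u, v))"
          and j="\<lambda>((x, z), (u, v)). (u, v, z)"])
       (auto simp: T_def splits_def)
  also have "\<dots> = (\<Sum>xy\<in>Sigma (splits w) (\<lambda>x. splits (snd x)).
      f (fst (fst xy)) * g (fst (snd xy)) * h (snd (snd xy)))"
    by (rule sum.reindex_bij_witness[where j="\<lambda>(u, v, z). ((u, v @ z), (v, z))"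
          and i="\<lambda>((u, y), (v, z)). (u, v, z)"])
       (auto simp: T_def splits_def)
  also have "\<dots> = (\<Sum>x\<in>splits w. \<Sum>y\<in>splits (snd x). f (fst x) * g (fst y) * h (snd y))"
    by (subst sum.Sigma) (auto simp: case_prod_unfold)
  also have "\<dots> = fa_mult f (fa_mult g h) w"
    by (simp add: fa_mult_splits sum_distrib_left case_prod_unfold mult.assoc)
  finally show ?thesis .
qed

lemma fa_mult_closed:
  assumes "finite {w. f w \<noteq> 0}" and "finite {w. g w \<noteq> 0}"
  shows "finite {w. fa_mult f g w \<noteq> 0}"
proof (rule finite_subset)
  show "{w. fa_mult f g w \<noteq> 0} \<subseteq> (\<lambda>(u, v). u @ v) ` ({w. f w \<noteq> 0} \<times> {w. g w \<noteq> 0})"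
  proof
    fix w assume "w \<in> {w. fa_mult f g w \<noteq> 0}"
    then have "(\<Sum>(u, v)\<in>splits w. f u * g v) \<noteq> 0" by (simp add: fa_mult_splits)
    then obtain u v where "(u, v) \<in> splits w" "f u * g v \<noteq> 0"
      by (metis (mono_tags, lifting) case_prod_conv sum.neutral surj_pair)
    then show "w \<in> (\<lambda>(u, v). u @ v) ` ({w. f w \<noteq> 0} \<times> {w. g w \<noteq> 0})"
      by (auto simp: splits_def image_iff)
  qed
qed (use assms in auto)

lemma fa_mult_one_left: "fa_mult (\<lambda>w. if w = [] then 1 else 0) g = g"
proof
  fix w
  have "fa_mult (\<lambda>w. if w = [] then 1 else 0) g w
      = (\<Sum>i\<in>{0}. (if take i w = [] then 1 else 0) * g (drop i w))"
    unfolding fa_mult_def by (rule sum.mono_neutral_right) auto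
  then show "fa_mult (\<lambda>w. if w = [] then 1 else 0) g w = g w" by simp
qed

lemma fa_mult_one_right: "fa_mult f (\<lambda>w. if w = [] then 1 else 0) = f"
proof
  fix w
  have "fa_mult f (\<lambda>w. if w = [] then 1 else 0) w
      = (\<Sum>i\<in>{length w}. f (take i w) * (if drop i w = [] then 1 else 0))"
    unfolding fa_mult_def by (rule sum.mono_neutral_right) auto
  then show "fa_mult f (\<lambda>w. if w = [] then 1 else 0) w = f w" by simp
qed

lemma ring_FreeAlg: "ring (FreeAlg :: (bool list \<Rightarrow> 'f::field) ring)"
proof (rule ringI)
  show "abelian_group (FreeAlg :: (bool list \<Rightarrow> 'f::field) ring)"
  proof (rule abelian_groupI, simp_all add: FreeAlg_simps)
    fix x y :: "bool list \<Rightarrow> 'f"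
    assume "finite {w. x w \<noteq> 0}" "finite {w. y w \<noteq> 0}"
    then show "finite {w. x w + y w \<noteq> 0}"
      by (rule finite_subset[rotated, OF finite_UnI]) auto
  next
    fix x y z :: "bool list \<Rightarrow> 'f"
    show "(\<lambda>w. x w + y w + z w) = (\<lambda>w. x w + (y w + z w))" by (simp add: add.assoc)
    show "(\<lambda>w. x w + y w) = (\<lambda>w. y w + x w)" by (simp add: add.commute)
  next
    fix x :: "bool list \<Rightarrow> 'f"
    assume "finite {w. x w \<noteq> 0}"
    then show "\<exists>y. finite {w. y w \<noteq> 0} \<and> (\<lambda>w. y w + x w) = (\<lambda>w. 0)"
      by (intro exI[where x="\<lambda>w. - x w"]) auto
  qed
  show "monoid (FreeAlg :: (bool list \<Rightarrow> 'f::field) ring)"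
    by (rule monoidI)
       (simp_all add: FreeAlg_simps fa_mult_closed fa_mult_one_left fa_mult_one_right
         fa_mult_assoc[abs_def])
  fix x y z :: "bool list \<Rightarrow> 'f"
  show "(x \<oplus>\<^bsub>FreeAlg\<^esub> y) \<otimes>\<^bsub>FreeAlg\<^esub> z = x \<otimes>\<^bsub>FreeAlg\<^esub> z \<oplus>\<^bsub>FreeAlg\<^esub> y \<otimes>\<^bsub>FreeAlg\<^esub> z"
    by (auto simp: FreeAlg_simps fa_mult_def distrib_right sum.distrib)
  show "z \<otimes>\<^bsub>FreeAlg\<^esub> (x \<oplus>\<^bsub>FreeAlg\<^esub> y) = z \<otimes>\<^bsub>FreeAlg\<^esub> x \<oplus>\<^bsub>FreeAlg\<^esub> z \<otimes>\<^bsub>FreeAlg\<^esub> y"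
    by (auto simp: FreeAlg_simps fa_mult_def distrib_left sum.distrib)
qed

interpretation FA: ring "FreeAlg :: (bool list \<Rightarrow> 'f::field) ring"
  by (rule ring_FreeAlg)

definition fa_word :: "bool list \<Rightarrow> bool list \<Rightarrow> 'f::field" where
  "fa_word u = (\<lambda>w. if w = u then 1 else 0)"

lemma fa_word_carrier [simp]: "fa_word u \<in> carrier FreeAlg"
  by (simp add: fa_word_def FreeAlg_carrier)

lemma fa_one_eq_word: "\<one>\<^bsub>FreeAlg\<^esub> = fa_word []"
  by (simp add: fa_word_def FreeAlg_simps)

lemma gen_a_eq_word: "gen_a = fa_word [False]"
  by (simp add: gen_a_def fa_word_def)

lemma gen_b_eq_word: "gen_b = fa_word [True]"
  by (simp add: gen_b_def fa_word_def)

lemma gen_carrier [simp]: "gen_a \<in> carrier FreeAlg" "gen_b \<in> carrier FreeAlg"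
  by (simp_all add: gen_a_eq_word gen_b_eq_word)

lemma fa_word_mult: "fa_word u \<otimes>\<^bsub>FreeAlg\<^esub> fa_word v = fa_word (u @ v)"
proof
  fix w
  have "(\<Sum>(x, y)\<in>splits w. fa_word u x * fa_word v y)
      = (\<Sum>(x, y)\<in>splits w \<inter> {(u, v)}. fa_word u x * fa_word v y)"
    by (rule sum.mono_neutral_right) (auto simp: fa_word_def split: if_splits)
  also have "\<dots> = fa_word (u @ v) w"
    by (cases "w = u @ v") (auto simp: fa_word_def splits_def)
  finally show "(fa_word u \<otimes>\<^bsub>FreeAlg\<^esub> fa_word v) w = fa_word (u @ v) w"
    by (simp add: fa_mult_splits FreeAlg_simps)
qed

lemma fa_smult_carrier [simp]: "f \<in> carrier FreeAlg \<Longrightarrow> fa_smult c f \<in> carrier FreeAlg"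
  by (auto simp: FreeAlg_carrier fa_smult_def intro: rev_finite_subset[of "{w. f w \<noteq> 0}"])

lemma fa_smult_mult_left: "fa_smult c f \<otimes>\<^bsub>FreeAlg\<^esub> g = fa_smult c (f \<otimes>\<^bsub>FreeAlg\<^esub> g)"
  by (auto simp: FreeAlg_simps fa_smult_def fa_mult_def sum_distrib_left mult.assoc)

lemma fa_smult_mult_right: "f \<otimes>\<^bsub>FreeAlg\<^esub> fa_smult c g = fa_smult c (f \<otimes>\<^bsub>FreeAlg\<^esub> g)"
  by (auto simp: FreeAlg_simps fa_smult_def fa_mult_def sum_distrib_left mult.left_commute)

lemma fa_scalar_carrier [simp]: "fa_scalar c \<in> carrier FreeAlg"
  by (simp add: fa_scalar_def)

lemma fa_scalar_mult_left: "f \<in> carrier FreeAlg \<Longrightarrow> fa_scalar c \<otimes>\<^bsub>FreeAlg\<^esub> f = fa_smult c f"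
  by (simp add: fa_scalar_def fa_smult_mult_left)

lemma fa_scalar_mult_right: "f \<in> carrier FreeAlg \<Longrightarrow> f \<otimes>\<^bsub>FreeAlg\<^esub> fa_scalar c = fa_smult c f"
  by (simp add: fa_scalar_def fa_smult_mult_right)

lemma fa_scalar_apply: "fa_scalar c = (\<lambda>w. c * fa_word [] w)"
  by (simp add: fa_scalar_def fa_smult_def fa_one_eq_word)

lemma finsum_FreeAlg_apply:
  assumes "finite A" "g \<in> A \<rightarrow> carrier FreeAlg"
  shows "finsum FreeAlg g A w = (\<Sum>a\<in>A. g a w)"
  using assms
proof (induction A rule: finite_induct)
  case empty
  then show ?case by (simp add: FreeAlg_simps)
next
  case (insert x F)
  then have "finsum FreeAlg g (insert x F) = g x \<oplus>\<^bsub>FreeAlg\<^esub> finsum FreeAlg g F"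
    by (intro FA.finsum_insert) auto
  with insert show ?case by (simp add: FreeAlg_simps del: FreeAlg_carrier)
qed

lemma fa_word_expansion:
  assumes "f \<in> carrier FreeAlg"
  shows "f = finsum FreeAlg (\<lambda>w. fa_smult (f w) (fa_word w)) {w. f w \<noteq> 0}"
proof
  fix w
  have fin: "finite {w. f w \<noteq> 0}" using assms by (simp add: FreeAlg_carrier)
  have "finsum FreeAlg (\<lambda>w. fa_smult (f w) (fa_word w)) {w. f w \<noteq> 0} w
      = (\<Sum>u\<in>{w. f w \<noteq> 0}. fa_smult (f u) (fa_word u) w)"
    by (rule finsum_FreeAlg_apply[OF fin]) auto
  also have "\<dots> = f w"
    by (simp add: fa_smult_def fa_word_def if_distrib sum.delta'[OF fin] cong: if_cong)
  finally show "f w = finsum FreeAlg (\<lambda>w. fa_smult (f w) (fa_word w)) {w. f w \<noteq> 0} w" ..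
qed

lemma fa_neg: "f \<in> carrier FreeAlg \<Longrightarrow> \<ominus>\<^bsub>FreeAlg\<^esub> f = (\<lambda>w. - f w)"
  by (rule FA.minus_equality)
     (auto simp: FreeAlg_simps intro: rev_finite_subset[of "{w. f w \<noteq> 0}"])

lemma fa_minus:
  "f \<in> carrier FreeAlg \<Longrightarrow> g \<in> carrier FreeAlg \<Longrightarrow> f \<ominus>\<^bsub>FreeAlg\<^esub> g = (\<lambda>w. f w - g w)"
  by (simp add: a_minus_def fa_neg FreeAlg_simps)

lemma fa_mult_addL: "fa_mult (\<lambda>w. f w + g w) h = (\<lambda>w. fa_mult f h w + fa_mult g h w)"
  by (auto simp: fa_mult_def distrib_right sum.distrib)
lemma fa_mult_addR: "fa_mult h (\<lambda>w. f w + g w) = (\<lambda>w. fa_mult h f w + fa_mult h g w)"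
  by (auto simp: fa_mult_def distrib_left sum.distrib)
lemma fa_mult_diffL: "fa_mult (\<lambda>w. f w - g w) h = (\<lambda>w. fa_mult f h w - fa_mult g h w)"
  by (auto simp: fa_mult_def left_diff_distrib sum_subtractf)
lemma fa_mult_diffR: "fa_mult h (\<lambda>w. f w - g w) = (\<lambda>w. fa_mult h f w - fa_mult h g w)"
  by (auto simp: fa_mult_def right_diff_distrib sum_subtractf)
lemma fa_mult_cmulL: "fa_mult (\<lambda>w. c * f w) h = (\<lambda>w. c * fa_mult f h w)"
  by (auto simp: fa_mult_def sum_distrib_left mult.assoc)
lemma fa_mult_cmulR: "fa_mult h (\<lambda>w. c * f w) = (\<lambda>w. c * fa_mult h f w)"
  by (auto simp: fa_mult_def sum_distrib_left mult.left_commute)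
lemma fa_mult_negL: "fa_mult (\<lambda>w. - f w) h = (\<lambda>w. - fa_mult f h w)"
  by (auto simp: fa_mult_def sum_negf)
lemma fa_mult_negR: "fa_mult h (\<lambda>w. - f w) = (\<lambda>w. - fa_mult h f w)"
  by (auto simp: fa_mult_def sum_negf)
lemma fa_mult_word: "fa_mult (fa_word u) (fa_word v) = fa_word (u @ v)"
  using fa_word_mult by (simp add: FreeAlg_simps)

lemmas fa_mult_simps = fa_mult_addL fa_mult_addR fa_mult_diffL fa_mult_diffR
  fa_mult_cmulL fa_mult_cmulR fa_mult_word fa_mult_negL fa_mult_negR

lemma gen_a_pow: "gen_a [^]\<^bsub>FreeAlg\<^esub> (n::nat) = fa_word (replicate n False)"
  by (induction n) (simp_all add: fa_one_eq_word gen_a_eq_word fa_word_mult replicate_append_same[symmetric])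

lemma gen_b_pow: "gen_b [^]\<^bsub>FreeAlg\<^esub> (n::nat) = fa_word (replicate n True)"
  by (induction n) (simp_all add: fa_one_eq_word gen_b_eq_word fa_word_mult replicate_append_same[symmetric])

lemma fa_eval_finsum:
  assumes "x \<in> carrier FreeAlg"
  shows "fa_eval P x
    = finsum FreeAlg (\<lambda>i. fa_smult (Polynomial.coeff P i) (x [^]\<^bsub>FreeAlg\<^esub> i)) {..degree P}"
proof
  fix w
  show "fa_eval P x w
    = finsum FreeAlg (\<lambda>i. fa_smult (Polynomial.coeff P i) (x [^]\<^bsub>FreeAlg\<^esub> i)) {..degree P} w"
    using assms by (subst finsum_FreeAlg_apply) (auto, simp add: fa_eval_def fa_smult_def)
qed

lemma fa_eval_carrier: "x \<in> carrier FreeAlg \<Longrightarrow> fa_eval P x \<in> carrier FreeAlg"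
  by (simp add: fa_eval_finsum FA.finsum_closed)

lemma gen_star_carrier [simp]: "gen_star p q x \<in> carrier FreeAlg"
  by (simp add: gen_star_def)

lemma word_star_Cons: "word_star p q (x # w) = word_star p q w \<otimes>\<^bsub>FreeAlg\<^esub> gen_star p q x"
  by (simp add: word_star_def)

lemma word_star_carrier [simp]: "word_star p q w \<in> carrier FreeAlg"
  by (induction w) (simp_all add: word_star_Cons, simp add: word_star_def)

lemma fa_star_carrier: "f \<in> carrier FreeAlg \<Longrightarrow> fa_star p q f \<in> carrier FreeAlg"
  unfolding fa_star_def by (intro FA.finsum_closed) auto


section \<open>Two-by-two matrices\<close>

datatype 'a mat2 = Mat2 (m11: 'a) (m12: 'a) (m21: 'a) (m22: 'a)

instantiation mat2 :: (comm_ring_1) ring_1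
begin
definition "0 = Mat2 0 0 0 0"
definition "1 = Mat2 1 0 0 1"
definition "x + y = Mat2 (m11 x + m11 y) (m12 x + m12 y) (m21 x + m21 y) (m22 x + m22 y)"
definition "x - y = Mat2 (m11 x - m11 y) (m12 x - m12 y) (m21 x - m21 y) (m22 x - m22 y)"
definition "- x = Mat2 (- m11 x) (- m12 x) (- m21 x) (- m22 x)"
definition "x * y = Mat2 (m11 x * m11 y + m12 x * m21 y) (m11 x * m12 y + m12 x * m22 y)
                        (m21 x * m11 y + m22 x * m21 y) (m21 x * m12 y + m22 x * m22 y)"
instance
  by standard (auto simp: zero_mat2_def one_mat2_def plus_mat2_def minus_mat2_def
      uminus_mat2_def times_mat2_def algebra_simps intro: mat2.expand)
end

lemma mat2_simps [simp]:
  "Mat2 a b c d + Mat2 a' b' c' d' = Mat2 (a + a') (b + b') (c + c') (d + d')"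
  "Mat2 a b c d - Mat2 a' b' c' d' = Mat2 (a - a') (b - b') (c - c') (d - d')"
  "- Mat2 a b c d = Mat2 (- a) (- b) (- c) (- d)"
  "Mat2 a b c d * Mat2 a' b' c' d'
     = Mat2 (a * a' + b * c') (a * b' + b * d') (c * a' + d * c') (c * b' + d * d')"
  by (simp_all add: plus_mat2_def minus_mat2_def uminus_mat2_def times_mat2_def)

lemma mat2_zero_one:
  "(0::'a::comm_ring_1 mat2) = Mat2 0 0 0 0"
  "(1::'a::comm_ring_1 mat2) = Mat2 1 0 0 1"
  by (simp_all add: zero_mat2_def one_mat2_def)

definition mscal :: "'a::comm_ring_1 \<Rightarrow> 'a mat2" where
  "mscal c = Mat2 c 0 0 c"

definition madj :: "'a::comm_ring_1 mat2 \<Rightarrow> 'a mat2" where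
  "madj x = Mat2 (m22 x) (- m12 x) (- m21 x) (m11 x)"

definition mtr :: "'a::comm_ring_1 mat2 \<Rightarrow> 'a" where
  "mtr x = m11 x + m22 x"

lemma mscal_mult_comm: "mscal c * x = x * mscal c"
  by (cases x) (simp add: mscal_def mult.commute)

lemma mscal_add: "mscal (a + b) = mscal a + mscal b"
  by (simp add: mscal_def)

lemma mscal_mult: "mscal (a * b) = mscal a * mscal b"
  by (simp add: mscal_def)

lemma mscal_0 [simp]: "mscal 0 = 0"
  by (simp add: mscal_def mat2_zero_one)

lemma mscal_1 [simp]: "mscal 1 = 1"
  by (simp add: mscal_def mat2_zero_one)

lemma madj_mult: "madj (x * y) = madj y * madj x"
  by (cases x, cases y) (simp add: madj_def algebra_simps)

lemma madj_add: "madj (x + y) = madj x + madj y"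
  by (cases x, cases y) (simp add: madj_def algebra_simps)

lemma madj_mscal_mult: "madj (mscal c * x) = mscal c * madj x"
  by (cases x) (simp add: madj_def mscal_def algebra_simps)

lemma madj_eq_trace_minus: "madj x = mscal (mtr x) - x"
  by (cases x) (simp add: madj_def mscal_def mtr_def)

lemma madj_sum: "madj (sum f A) = (\<Sum>a\<in>A. madj (f a))"
proof (induction A rule: infinite_finite_induct)
  case (insert x F)
  then show ?case by (simp add: madj_add)
qed (simp_all add: madj_def mat2_zero_one)

lemma mat2_quadratic_root_trace:
  fixes M :: "'a::idom mat2"
  assumes root: "mscal c0 + mscal c1 * M + M * M = 0"
    and nonscalar: "\<And>g. M \<noteq> mscal g"
  shows "mtr M = - c1"
proof (rule ccontr)
  obtain a b c d where M: "M = Mat2 a b c d" by (cases M)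
  assume "mtr M \<noteq> - c1"
  then have t: "a + d + c1 \<noteq> 0"
    by (simp add: M mtr_def eq_neg_iff_add_eq_0)
  from root have e11: "c0 + c1 * a + (a * a + b * c) = 0" and e12: "c1 * b + (a * b + b * d) = 0"
    and e21: "c1 * c + (c * a + d * c) = 0" and e22: "c0 + c1 * d + (c * b + d * d) = 0"
    by (simp_all add: M mscal_def mat2_zero_one)
  have "(a + d + c1) * b = 0" using e12 by (simp add: algebra_simps)
  moreover have "(a + d + c1) * c = 0" using e21 by (simp add: algebra_simps)
  moreover have "(a + d + c1) * (a - d) = 0"
  proof -
    have "(a + d + c1) * (a - d) = (c0 + c1 * a + (a * a + b * c)) - (c0 + c1 * d + (c * b + d * d))"
      by (simp add: algebra_simps)
    then show ?thesis using e11 e22 by simp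
  qed
  ultimately have "M = mscal a"
    using t by (simp add: M mscal_def)
  with nonscalar show False by blast
qed

lemma poly_quadratic_root_const:
  fixes g :: "'a::idom poly"
  assumes "g * g + [:c1:] * g + [:c0:] = 0"
  shows "degree g = 0"
proof (rule ccontr)
  assume deg: "degree g \<noteq> 0"
  then have "degree (g * g) = degree g + degree g"
    by (intro degree_mult_eq) auto
  moreover have "g * g = - ([:c1:] * g + [:c0:])"
    using assms by (metis add.assoc eq_neg_iff_add_eq_0)
  moreover have "degree ([:c1:] * g + [:c0:]) \<le> degree g"
    by (intro degree_add_le) (auto simp: degree_smult_le)
  ultimately have "degree g + degree g \<le> degree g"
    by (metis degree_minus)
  with deg show False by simp
qed

lemma mat2_poly_quadratic_root_trace:
  fixes M :: "'a::idom poly mat2"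
  assumes root: "mscal [:c0:] + mscal [:c1:] * M + M * M = 0"
    and nonconst: "\<And>r. M \<noteq> mscal [:r:]"
  shows "mtr M = [:- c1:]"
proof -
  have "M \<noteq> mscal g" for g
  proof
    assume M: "M = mscal g"
    then have "g * g + [:c1:] * g + [:c0:] = 0"
      using root by (simp add: mscal_def mat2_zero_one algebra_simps)
    then obtain r where "g = [:r:]"
      by (metis poly_quadratic_root_const degree_eq_zeroE)
    with M nonconst show False by blast
  qed
  then show ?thesis
    using mat2_quadratic_root_trace[OF root] by simp
qed

section \<open>Polynomial matrix representations of the free algebra\<close>

definition fa_mat_hom :: "((bool list \<Rightarrow> 'f::field) \<Rightarrow> 'f poly mat2) \<Rightarrow> bool" where
  "fa_mat_hom h \<longleftrightarrow>
     (\<forall>f\<in>carrier FreeAlg. \<forall>g\<in>carrier FreeAlg.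
        h (f \<oplus>\<^bsub>FreeAlg\<^esub> g) = h f + h g \<and> h (f \<otimes>\<^bsub>FreeAlg\<^esub> g) = h f * h g) \<and>
     h \<one>\<^bsub>FreeAlg\<^esub> = 1 \<and>
     (\<forall>c. \<forall>f\<in>carrier FreeAlg. h (fa_smult c f) = mscal [:c:] * h f)"

lemma fa_mat_homD:
  assumes "fa_mat_hom h"
  shows "\<And>f g. f \<in> carrier FreeAlg \<Longrightarrow> g \<in> carrier FreeAlg \<Longrightarrow> h (f \<oplus>\<^bsub>FreeAlg\<^esub> g) = h f + h g"
    and "\<And>f g. f \<in> carrier FreeAlg \<Longrightarrow> g \<in> carrier FreeAlg \<Longrightarrow> h (f \<otimes>\<^bsub>FreeAlg\<^esub> g) = h f * h g"
    and "h \<one>\<^bsub>FreeAlg\<^esub> = 1"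
    and "\<And>c f. f \<in> carrier FreeAlg \<Longrightarrow> h (fa_smult c f) = mscal [:c:] * h f"
  using assms unfolding fa_mat_hom_def by blast+

lemma additive_finsum_FreeAlg:
  fixes h :: "(bool list \<Rightarrow> 'f::field) \<Rightarrow> 'a::comm_monoid_add"
  assumes add: "\<And>f g. f \<in> carrier FreeAlg \<Longrightarrow> g \<in> carrier FreeAlg \<Longrightarrow> h (f \<oplus>\<^bsub>FreeAlg\<^esub> g) = h f + h g"
    and zero: "h \<zero>\<^bsub>FreeAlg\<^esub> = 0"
    and "finite A" "g \<in> A \<rightarrow> carrier FreeAlg"
  shows "h (finsum FreeAlg g A) = (\<Sum>a\<in>A. h (g a))"
  using assms(3,4)
proof (induction A rule: finite_induct)
  case empty
  then show ?case by (simp add: zero)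
next
  case (insert x F)
  then have "finsum FreeAlg g (insert x F) = g x \<oplus>\<^bsub>FreeAlg\<^esub> finsum FreeAlg g F"
    by (intro FA.finsum_insert) auto
  moreover have "h (g x \<oplus>\<^bsub>FreeAlg\<^esub> finsum FreeAlg g F) = h (g x) + h (finsum FreeAlg g F)"
    using insert by (intro add FA.finsum_closed) auto
  ultimately show ?case using insert by simp
qed

lemma fa_mat_hom_zero:
  assumes "fa_mat_hom h"
  shows "h \<zero>\<^bsub>FreeAlg\<^esub> = 0"
proof -
  have "h \<zero>\<^bsub>FreeAlg\<^esub> = h (\<zero>\<^bsub>FreeAlg\<^esub> \<oplus>\<^bsub>FreeAlg\<^esub> \<zero>\<^bsub>FreeAlg\<^esub>)" by simp
  also have "\<dots> = h \<zero>\<^bsub>FreeAlg\<^esub> + h \<zero>\<^bsub>FreeAlg\<^esub>" by (rule fa_mat_homD(1)[OF assms]) auto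
  finally show ?thesis by simp
qed

lemma fa_mat_hom_neg:
  assumes "fa_mat_hom h" "f \<in> carrier FreeAlg"
  shows "h (\<ominus>\<^bsub>FreeAlg\<^esub> f) = - h f"
proof -
  have "h (\<ominus>\<^bsub>FreeAlg\<^esub> f) + h f = h (\<ominus>\<^bsub>FreeAlg\<^esub> f \<oplus>\<^bsub>FreeAlg\<^esub> f)"
    using assms by (simp add: fa_mat_homD(1))
  also have "\<dots> = 0"
    using assms by (simp add: FA.l_neg fa_mat_hom_zero)
  finally show ?thesis by (simp add: eq_neg_iff_add_eq_0)
qed

lemma fa_mat_hom_finsum:
  assumes "fa_mat_hom h" "finite A" "g \<in> A \<rightarrow> carrier FreeAlg"
  shows "h (finsum FreeAlg g A) = (\<Sum>a\<in>A. h (g a))"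
  by (rule additive_finsum_FreeAlg[OF fa_mat_homD(1)[OF assms(1)] fa_mat_hom_zero[OF assms(1)] assms(2,3)])

lemma fa_mat_hom_expansion:
  assumes "fa_mat_hom h" "f \<in> carrier FreeAlg"
  shows "h f = (\<Sum>w\<in>{w. f w \<noteq> 0}. mscal [:f w:] * h (fa_word w))"
proof -
  have fin: "finite {w. f w \<noteq> 0}" using assms(2) by (simp add: FreeAlg_carrier)
  have "h f = h (finsum FreeAlg (\<lambda>w. fa_smult (f w) (fa_word w)) {w. f w \<noteq> 0})"
    using fa_word_expansion[OF assms(2)] by simp
  also have "\<dots> = (\<Sum>w\<in>{w. f w \<noteq> 0}. h (fa_smult (f w) (fa_word w)))"
    using assms fin by (intro fa_mat_hom_finsum) auto
  also have "\<dots> = (\<Sum>w\<in>{w. f w \<noteq> 0}. mscal [:f w:] * h (fa_word w))"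
    using assms(1) by (simp add: fa_mat_homD(4))
  finally show ?thesis .
qed

lemma fa_mat_hom_scalar:
  assumes "fa_mat_hom h"
  shows "h (fa_scalar c) = mscal [:c:]"
  using assms by (simp add: fa_scalar_def fa_mat_homD(3,4))

lemma fa_mat_hom_pow:
  assumes "fa_mat_hom h" "x \<in> carrier FreeAlg"
  shows "h (x [^]\<^bsub>FreeAlg\<^esub> (n::nat)) = h x ^ n"
  by (induction n) (simp_all add: fa_mat_homD(2,3)[OF assms(1)] assms(2) power_commutes)

lemma fa_mat_hom_eval:
  assumes "fa_mat_hom h" "x \<in> carrier FreeAlg"
  shows "h (fa_eval P x) = (\<Sum>i\<le>degree P. mscal [:Polynomial.coeff P i:] * h x ^ i)"
  unfolding fa_eval_finsum[OF assms(2)] using assms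
  by (subst fa_mat_hom_finsum) (auto simp: fa_mat_homD(4) fa_mat_hom_pow)

lemma fa_mat_hom_kernel_ideal:
  assumes "fa_mat_hom h"
  shows "ideal {f \<in> carrier FreeAlg. h f = 0} FreeAlg"
proof (rule idealI[OF ring_FreeAlg])
  show "subgroup {f \<in> carrier FreeAlg. h f = 0} (add_monoid FreeAlg)"
    by (rule FA.add.subgroupI)
       (auto simp: fa_mat_hom_zero[OF assms] fa_mat_hom_neg[OF assms] fa_mat_homD(1)[OF assms]
         a_inv_def[symmetric])
next
  fix a x :: "bool list \<Rightarrow> 'a"
  assume "a \<in> {f \<in> carrier FreeAlg. h f = 0}" "x \<in> carrier FreeAlg"
  then show "x \<otimes>\<^bsub>FreeAlg\<^esub> a \<in> {f \<in> carrier FreeAlg. h f = 0}"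
    and "a \<otimes>\<^bsub>FreeAlg\<^esub> x \<in> {f \<in> carrier FreeAlg. h f = 0}"
    using fa_mat_homD(2)[OF assms] by simp_all
qed

lemma W_ideal_subset_kernel:
  assumes "fa_mat_hom h" "h (fa_eval p gen_a) = 0" "h (fa_eval q gen_b) = 0"
  shows "W_ideal p q \<subseteq> {f \<in> carrier FreeAlg. h f = 0}"
  unfolding W_ideal_def
  by (rule FA.genideal_minimal[OF fa_mat_hom_kernel_ideal[OF assms(1)]])
     (use assms in \<open>auto simp: fa_eval_carrier\<close>)

text \<open>The adjugate is the anti-automorphism \<open>M \<mapsto> tr M - M\<close>, so it matches the
  adjunction on all of the free algebra once it does so on the generators.\<close>

lemma fa_mat_hom_star:
  assumes h: "fa_mat_hom h"
    and tra: "mtr (h gen_a) = [:tr p:]" and trb: "mtr (h gen_b) = [:tr q:]"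
    and f: "f \<in> carrier FreeAlg"
  shows "h (fa_star p q f) = madj (h f)"
proof -
  have gen: "h (gen_star p q x) = madj (h (fa_word [x]))" for x
    using h tra trb
    by (cases x) (simp_all add: gen_star_def a_minus_def fa_mat_homD(1) fa_mat_hom_neg
        fa_mat_hom_scalar madj_eq_trace_minus gen_a_eq_word gen_b_eq_word)
  have word: "h (word_star p q w) = madj (h (fa_word w))" for w
  proof (induction w)
    case Nil
    then show ?case
      using fa_mat_homD(3)[OF h] by (simp add: word_star_def fa_one_eq_word madj_def mat2_zero_one)
  next
    case (Cons x w)
    have e: "fa_word (x # w) = fa_word [x] \<otimes>\<^bsub>FreeAlg\<^esub> fa_word w"
      by (simp add: fa_word_mult)
    show ?case
      unfolding e using Cons by (simp add: word_star_Cons fa_mat_homD(2)[OF h] gen madj_mult)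
  qed
  have fin: "finite {w. f w \<noteq> 0}" using f by (simp add: FreeAlg_carrier)
  have "h (fa_star p q f) = (\<Sum>w\<in>{w. f w \<noteq> 0}. h (fa_smult (f w) (word_star p q w)))"
    unfolding fa_star_def using fin by (intro fa_mat_hom_finsum[OF h]) auto
  also have "\<dots> = (\<Sum>w\<in>{w. f w \<noteq> 0}. madj (mscal [:f w:] * h (fa_word w)))"
    by (simp add: fa_mat_homD(4)[OF h] word madj_mscal_mult)
  also have "\<dots> = madj (h f)"
    by (simp add: madj_sum[symmetric] fa_mat_hom_expansion[OF h f])
  finally show ?thesis .
qed

definition word_mat :: "(bool \<Rightarrow> 'a::ring_1) \<Rightarrow> bool list \<Rightarrow> 'a" where
  "word_mat G w = foldr (\<lambda>x M. G x * M) w 1"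

lemma word_mat_append: "word_mat G (u @ v) = word_mat G u * word_mat G v"
  by (induction u) (simp_all add: word_mat_def mult.assoc)

lemma mscal_pconst_add: "mscal [:a + b:] = mscal [:a:] + mscal [:b::'a::comm_ring_1:]"
  by (simp add: mscal_def)

lemma mscal_pconst_mult: "mscal [:a * b:] = mscal [:a:] * mscal [:b::'a::comm_ring_1:]"
  by (simp add: mscal_def)

definition mat_rep :: "(bool \<Rightarrow> 'f::field poly mat2) \<Rightarrow> (bool list \<Rightarrow> 'f) \<Rightarrow> 'f poly mat2" where
  "mat_rep G f = (\<Sum>w\<in>{w. f w \<noteq> 0}. mscal [:f w:] * word_mat G w)"

lemma mat_rep_superset:
  assumes "finite A" "{w. f w \<noteq> 0} \<subseteq> A"
  shows "mat_rep G f = (\<Sum>w\<in>A. mscal [:f w:] * word_mat G w)"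
  unfolding mat_rep_def by (rule sum.mono_neutral_left) (use assms in auto)

lemma mat_rep_add:
  assumes "f \<in> carrier FreeAlg" "g \<in> carrier FreeAlg"
  shows "mat_rep G (f \<oplus>\<^bsub>FreeAlg\<^esub> g) = mat_rep G f + mat_rep G g"
proof -
  define A where "A = {w. f w \<noteq> 0} \<union> {w. g w \<noteq> 0}"
  have fin: "finite A" using assms by (simp add: A_def FreeAlg_carrier)
  have "mat_rep G (f \<oplus>\<^bsub>FreeAlg\<^esub> g) = (\<Sum>w\<in>A. mscal [:f w + g w:] * word_mat G w)"
    by (subst mat_rep_superset[OF fin]) (auto simp: A_def FreeAlg_simps)
  also have "\<dots> = (\<Sum>w\<in>A. mscal [:f w:] * word_mat G w) + (\<Sum>w\<in>A. mscal [:g w:] * word_mat G w)"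
    by (simp add: sum.distrib[symmetric] mscal_pconst_add distrib_right)
  also have "\<dots> = mat_rep G f + mat_rep G g"
    using fin by (simp add: mat_rep_superset[of A f] mat_rep_superset[of A g] A_def)
  finally show ?thesis .
qed

lemma mat_rep_zero: "mat_rep G \<zero>\<^bsub>FreeAlg\<^esub> = 0"
  by (simp add: mat_rep_def FreeAlg_simps)

lemma mat_rep_smult:
  assumes "f \<in> carrier FreeAlg"
  shows "mat_rep G (fa_smult c f) = mscal [:c:] * mat_rep G f"
proof -
  have fin: "finite {w. f w \<noteq> 0}" using assms by (simp add: FreeAlg_carrier)
  have "mat_rep G (fa_smult c f) = (\<Sum>w\<in>{w. f w \<noteq> 0}. mscal [:c * f w:] * word_mat G w)"
    by (subst mat_rep_superset[OF fin]) (auto simp: fa_smult_def)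
  also have "\<dots> = mscal [:c:] * mat_rep G f"
    by (simp add: mat_rep_def sum_distrib_left mscal_pconst_mult mult.assoc)
  finally show ?thesis .
qed

lemma mat_rep_word: "mat_rep G (fa_word w) = word_mat G w"
proof -
  have "mat_rep G (fa_word w) = (\<Sum>v\<in>{w}. mscal [:fa_word w v:] * word_mat G v)"
    by (rule mat_rep_superset) (auto simp: fa_word_def)
  then show ?thesis by (simp add: fa_word_def pCons_one)
qed

lemma mat_rep_finsum:
  assumes "finite A" "g \<in> A \<rightarrow> carrier FreeAlg"
  shows "mat_rep G (finsum FreeAlg g A) = (\<Sum>a\<in>A. mat_rep G (g a))"
  by (rule additive_finsum_FreeAlg[OF mat_rep_add mat_rep_zero assms])

lemma mat_rep_word_mult:
  assumes g: "g \<in> carrier FreeAlg"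
  shows "mat_rep G (fa_word u \<otimes>\<^bsub>FreeAlg\<^esub> g) = word_mat G u * mat_rep G g"
proof -
  have fin: "finite {w. g w \<noteq> 0}" using g by (simp add: FreeAlg_carrier)
  have "fa_word u \<otimes>\<^bsub>FreeAlg\<^esub> g
      = finsum FreeAlg (\<lambda>w. fa_word u \<otimes>\<^bsub>FreeAlg\<^esub> fa_smult (g w) (fa_word w)) {w. g w \<noteq> 0}"
    using fin by (subst fa_word_expansion[OF g]) (intro FA.finsum_rdistr; auto)
  then have "mat_rep G (fa_word u \<otimes>\<^bsub>FreeAlg\<^esub> g)
      = (\<Sum>w\<in>{w. g w \<noteq> 0}. mat_rep G (fa_smult (g w) (fa_word (u @ w))))"
    using fin by (simp add: mat_rep_finsum fa_smult_mult_right fa_word_mult)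
  also have "\<dots> = (\<Sum>w\<in>{w. g w \<noteq> 0}. word_mat G u * (mscal [:g w:] * word_mat G w))"
    by (simp add: mat_rep_smult mat_rep_word word_mat_append mscal_mult_comm mult.assoc)
  also have "\<dots> = word_mat G u * mat_rep G g"
    by (simp add: mat_rep_def sum_distrib_left)
  finally show ?thesis .
qed

lemma mat_rep_mult:
  assumes f: "f \<in> carrier FreeAlg" and g: "g \<in> carrier FreeAlg"
  shows "mat_rep G (f \<otimes>\<^bsub>FreeAlg\<^esub> g) = mat_rep G f * mat_rep G g"
proof -
  have fin: "finite {w. f w \<noteq> 0}" using f by (simp add: FreeAlg_carrier)
  have "f \<otimes>\<^bsub>FreeAlg\<^esub> g
      = finsum FreeAlg (\<lambda>w. fa_smult (f w) (fa_word w) \<otimes>\<^bsub>FreeAlg\<^esub> g) {w. f w \<noteq> 0}"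
    using fin g by (subst fa_word_expansion[OF f]) (intro FA.finsum_ldistr; auto)
  then have "mat_rep G (f \<otimes>\<^bsub>FreeAlg\<^esub> g)
      = (\<Sum>w\<in>{w. f w \<noteq> 0}. mat_rep G (fa_smult (f w) (fa_word w \<otimes>\<^bsub>FreeAlg\<^esub> g)))"
    using fin g by (simp add: mat_rep_finsum fa_smult_mult_left)
  also have "\<dots> = (\<Sum>w\<in>{w. f w \<noteq> 0}. mscal [:f w:] * word_mat G w * mat_rep G g)"
    using g by (simp add: mat_rep_smult mat_rep_word_mult mult.assoc)
  also have "\<dots> = mat_rep G f * mat_rep G g"
    by (simp add: mat_rep_def sum_distrib_right)
  finally show ?thesis .
qed

lemma fa_mat_hom_mat_rep: "fa_mat_hom (mat_rep G)"
  unfolding fa_mat_hom_def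
  by (simp add: mat_rep_add mat_rep_mult mat_rep_smult fa_one_eq_word mat_rep_word word_mat_def)

lemma mat_rep_gen: "mat_rep G gen_a = G False" "mat_rep G gen_b = G True"
  by (simp_all add: gen_a_eq_word gen_b_eq_word mat_rep_word word_mat_def)

section \<open>The algebra \<open>W p q\<close> as a module over its central subalgebra\<close>

lemma W_ideal_ideal: "ideal (W_ideal p q) FreeAlg"
  unfolding W_ideal_def by (rule FA.genideal_ideal) (auto simp: fa_eval_carrier)

locale quadratic_pair =
  fixes p q :: "'f::field poly"
  assumes lead_p: "lead_coeff p = 1" and deg_p: "degree p = 2"
    and lead_q: "lead_coeff q = 1" and deg_q: "degree q = 2"
begin

definition "p0 = Polynomial.coeff p 0"
definition "p1 = Polynomial.coeff p 1"
definition "q0 = Polynomial.coeff q 0"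
definition "q1 = Polynomial.coeff q 1"

lemma coeff_p_2: "Polynomial.coeff p 2 = 1"
  using lead_p deg_p by simp

lemma coeff_q_2: "Polynomial.coeff q 2 = 1"
  using lead_q deg_q by simp

lemma fa_mat_hom_eval_p:
  "fa_mat_hom h \<Longrightarrow> h (fa_eval p gen_a) = mscal [:p0:] + mscal [:p1:] * h gen_a + h gen_a * h gen_a"
  by (simp add: fa_mat_hom_eval deg_p numeral_2_eq_2 coeff_p_2[unfolded numeral_2_eq_2]
      p0_def p1_def pCons_one power2_eq_square)

lemma fa_mat_hom_eval_q:
  "fa_mat_hom h \<Longrightarrow> h (fa_eval q gen_b) = mscal [:q0:] + mscal [:q1:] * h gen_b + h gen_b * h gen_b"
  by (simp add: fa_mat_hom_eval deg_q numeral_2_eq_2 coeff_q_2[unfolded numeral_2_eq_2]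
      q0_def q1_def pCons_one power2_eq_square)

lemma eval_p_word:
  "fa_eval p (fa_word [False]) = (\<lambda>w. p0 * fa_word [] w + p1 * fa_word [False] w + fa_word [False, False] w)"
  by (rule ext) (simp add: fa_eval_def deg_p gen_a_pow[unfolded gen_a_eq_word] numeral_2_eq_2
      coeff_p_2[unfolded numeral_2_eq_2] p0_def p1_def)

lemma eval_q_word:
  "fa_eval q (fa_word [True]) = (\<lambda>w. q0 * fa_word [] w + q1 * fa_word [True] w + fa_word [True, True] w)"
  by (rule ext) (simp add: fa_eval_def deg_q gen_b_pow[unfolded gen_b_eq_word] numeral_2_eq_2
      coeff_q_2[unfolded numeral_2_eq_2] q0_def q1_def)

abbreviation "J \<equiv> W_ideal p q"

sublocale J: ideal J FreeAlg
  by (rule W_ideal_ideal)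

lemma eval_p_in_ideal: "fa_eval p gen_a \<in> J"
  and eval_q_in_ideal: "fa_eval q gen_b \<in> J"
  using FA.genideal_self[of "{fa_eval p gen_a, fa_eval q gen_b}"]
  unfolding W_ideal_def by (auto simp: fa_eval_carrier)

lemma ring_W: "ring (W p q)"
  unfolding W_def by (rule J.quotient_is_ring)

sublocale W: ring "W p q"
  by (rule ring_W)

abbreviation W_mult (infixl "\<odot>" 70) where "x \<odot> y \<equiv> x \<otimes>\<^bsub>W p q\<^esub> y"
abbreviation W_add (infixl "\<boxplus>" 65) where "x \<boxplus> y \<equiv> x \<oplus>\<^bsub>W p q\<^esub> y"
abbreviation W_zero ("\<zero>\<^sub>W") where "\<zero>\<^sub>W \<equiv> \<zero>\<^bsub>W p q\<^esub>"
abbreviation W_one ("\<one>\<^sub>W") where "\<one>\<^sub>W \<equiv> \<one>\<^bsub>W p q\<^esub>"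

abbreviation cls where "cls f \<equiv> J +>\<^bsub>FreeAlg\<^esub> f"

lemma cls_hom: "cls \<in> ring_hom FreeAlg (W p q)"
  unfolding W_def by (rule J.rcos_ring_hom)

lemma W_carrier: "carrier (W p q) = cls ` carrier FreeAlg"
  unfolding W_def FactRing_def A_RCOSETS_def' by auto

lemma W_carrier_E:
  assumes "X \<in> carrier (W p q)"
  obtains x where "x \<in> carrier FreeAlg" "X = cls x"
  using assms unfolding W_carrier by auto

lemma W_zero_eq: "\<zero>\<^sub>W = J"
  unfolding W_def FactRing_def by simp

lemma cls_carrier: "f \<in> carrier FreeAlg \<Longrightarrow> cls f \<in> carrier (W p q)"
  using ring_hom_closed[OF cls_hom] .

lemma cls_add: "f \<in> carrier FreeAlg \<Longrightarrow> g \<in> carrier FreeAlg \<Longrightarrow> cls (f \<oplus>\<^bsub>FreeAlg\<^esub> g) = cls f \<boxplus> cls g"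
  using ring_hom_add[OF cls_hom] .

lemma cls_mult: "f \<in> carrier FreeAlg \<Longrightarrow> g \<in> carrier FreeAlg \<Longrightarrow> cls (f \<otimes>\<^bsub>FreeAlg\<^esub> g) = cls f \<odot> cls g"
  using ring_hom_mult[OF cls_hom] .

lemma cls_one: "cls \<one>\<^bsub>FreeAlg\<^esub> = \<one>\<^sub>W"
  using ring_hom_one[OF cls_hom] .

lemma cls_zero: "cls \<zero>\<^bsub>FreeAlg\<^esub> = \<zero>\<^sub>W"
  using ring_hom_zero[OF cls_hom ring_FreeAlg ring_W] .

lemma cls_ideal: "f \<in> J \<Longrightarrow> cls f = \<zero>\<^sub>W"
  by (simp add: W_zero_eq J.a_rcos_const)

lemma cls_eq_iff:
  assumes "f \<in> carrier FreeAlg" "g \<in> carrier FreeAlg"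
  shows "cls f = cls g \<longleftrightarrow> f \<ominus>\<^bsub>FreeAlg\<^esub> g \<in> J"
  using assms
  by (metis J.a_rcos_module_minus J.a_repr_independence' J.a_repr_independenceD ring_FreeAlg)

lemma cls_eqI:
  assumes "f \<in> carrier FreeAlg" "g \<in> carrier FreeAlg" "(\<lambda>w. f w - g w) \<in> J"
  shows "cls f = cls g"
  using assms by (simp add: cls_eq_iff fa_minus)

lemma cls_some_rep:
  assumes "X \<in> carrier (W p q)"
  shows "(SOME r. r \<in> X) \<in> carrier FreeAlg" "cls (SOME r. r \<in> X) = X"
proof -
  obtain x where x: "x \<in> carrier FreeAlg" "X = cls x" using assms by (rule W_carrier_E)
  then have "x \<in> X" using J.a_rcos_self by simp
  then have s: "(SOME r. r \<in> X) \<in> X" by (rule someI[of "\<lambda>r. r \<in> X"])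
  then show "(SOME r. r \<in> X) \<in> carrier FreeAlg" using x J.a_elemrcos_carrier by blast
  show "cls (SOME r. r \<in> X) = X" using s x by (metis J.a_repr_independence')
qed

abbreviation "sc \<equiv> W_scalar p q"

definition "aW = cls gen_a"
definition "bW = cls gen_b"

definition "c_free =
  (\<lambda>w. fa_word [False, True] w + fa_word [True, False] w + q1 * fa_word [False] w + p1 * fa_word [True] w)"

definition "cW = cls c_free"

lemma c_free_eq:
  "c_free = fa_word [False, True] \<oplus>\<^bsub>FreeAlg\<^esub> fa_word [True, False]
     \<oplus>\<^bsub>FreeAlg\<^esub> fa_smult q1 (fa_word [False]) \<oplus>\<^bsub>FreeAlg\<^esub> fa_smult p1 (fa_word [True])"
  by (simp add: c_free_def FreeAlg_simps fa_smult_def)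

lemma c_free_carrier: "c_free \<in> carrier FreeAlg"
  by (simp add: c_free_eq)

lemma sc_carrier [simp]: "sc r \<in> carrier (W p q)"
  by (simp add: W_scalar_def cls_carrier)

lemma aW_carrier [simp]: "aW \<in> carrier (W p q)"
  by (simp add: aW_def cls_carrier)

lemma bW_carrier [simp]: "bW \<in> carrier (W p q)"
  by (simp add: bW_def cls_carrier)

lemma cW_carrier [simp]: "cW \<in> carrier (W p q)"
  by (simp add: cW_def cls_carrier c_free_carrier)

lemma sc_add: "sc (a + b) = sc a \<boxplus> sc b"
proof -
  have "fa_scalar (a + b) = fa_scalar a \<oplus>\<^bsub>FreeAlg\<^esub> fa_scalar b"
    by (simp add: fa_scalar_apply FreeAlg_simps distrib_right)
  then show ?thesis by (simp add: W_scalar_def cls_add)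
qed

lemma sc_mult: "sc (a * b) = sc a \<odot> sc b"
proof -
  have "fa_scalar (a * b) = fa_scalar a \<otimes>\<^bsub>FreeAlg\<^esub> fa_scalar b"
    by (simp add: fa_scalar_mult_left) (simp add: fa_scalar_apply fa_smult_def mult.assoc)
  then show ?thesis by (simp add: W_scalar_def cls_mult)
qed

lemma sc_one: "sc 1 = \<one>\<^sub>W"
proof -
  have "fa_scalar (1::'f) = \<one>\<^bsub>FreeAlg\<^esub>" by (simp add: fa_scalar_apply fa_one_eq_word)
  then show ?thesis using cls_one by (simp only: W_scalar_def)
qed

lemma sc_zero: "sc 0 = \<zero>\<^sub>W"
proof -
  have "fa_scalar (0::'f) = \<zero>\<^bsub>FreeAlg\<^esub>" by (simp add: fa_scalar_apply FreeAlg_simps)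
  then show ?thesis using cls_zero by (simp only: W_scalar_def)
qed

lemma sc_comm: "X \<in> carrier (W p q) \<Longrightarrow> sc r \<odot> X = X \<odot> sc r"
  by (elim W_carrier_E)
     (simp add: W_scalar_def cls_mult[symmetric] fa_scalar_mult_left fa_scalar_mult_right)

lemma W_smult_eq: "W_smult p q c X = sc c \<odot> X"
  by (simp add: W_smult_def)

lemma rel_aa: "aW \<odot> aW = sc (- p0) \<boxplus> sc (- p1) \<odot> aW"
proof -
  have "aW \<odot> aW = cls (gen_a \<otimes>\<^bsub>FreeAlg\<^esub> gen_a)" by (simp add: aW_def cls_mult)
  also have "\<dots> = cls (fa_scalar (- p0) \<oplus>\<^bsub>FreeAlg\<^esub> fa_scalar (- p1) \<otimes>\<^bsub>FreeAlg\<^esub> gen_a)"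
  proof (rule cls_eqI)
    have "(\<lambda>w. (gen_a \<otimes>\<^bsub>FreeAlg\<^esub> gen_a) w
        - (fa_scalar (- p0) \<oplus>\<^bsub>FreeAlg\<^esub> fa_scalar (- p1) \<otimes>\<^bsub>FreeAlg\<^esub> gen_a) w) = fa_eval p gen_a"
      by (simp add: eval_p_word FreeAlg_simps fa_scalar_apply gen_a_eq_word fa_mult_simps)
         (auto simp: fa_word_def)
    then show "(\<lambda>w. (gen_a \<otimes>\<^bsub>FreeAlg\<^esub> gen_a) w
        - (fa_scalar (- p0) \<oplus>\<^bsub>FreeAlg\<^esub> fa_scalar (- p1) \<otimes>\<^bsub>FreeAlg\<^esub> gen_a) w) \<in> J"
      using eval_p_in_ideal by simp
  qed simp_all
  finally show ?thesis by (simp add: W_scalar_def aW_def cls_add cls_mult)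
qed

lemma rel_bb: "bW \<odot> bW = sc (- q0) \<boxplus> sc (- q1) \<odot> bW"
proof -
  have "bW \<odot> bW = cls (gen_b \<otimes>\<^bsub>FreeAlg\<^esub> gen_b)" by (simp add: bW_def cls_mult)
  also have "\<dots> = cls (fa_scalar (- q0) \<oplus>\<^bsub>FreeAlg\<^esub> fa_scalar (- q1) \<otimes>\<^bsub>FreeAlg\<^esub> gen_b)"
  proof (rule cls_eqI)
    have "(\<lambda>w. (gen_b \<otimes>\<^bsub>FreeAlg\<^esub> gen_b) w
        - (fa_scalar (- q0) \<oplus>\<^bsub>FreeAlg\<^esub> fa_scalar (- q1) \<otimes>\<^bsub>FreeAlg\<^esub> gen_b) w) = fa_eval q gen_b"
      by (simp add: eval_q_word FreeAlg_simps fa_scalar_apply gen_b_eq_word fa_mult_simps)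
         (auto simp: fa_word_def)
    then show "(\<lambda>w. (gen_b \<otimes>\<^bsub>FreeAlg\<^esub> gen_b) w
        - (fa_scalar (- q0) \<oplus>\<^bsub>FreeAlg\<^esub> fa_scalar (- q1) \<otimes>\<^bsub>FreeAlg\<^esub> gen_b) w) \<in> J"
      using eval_q_in_ideal by simp
  qed simp_all
  finally show ?thesis by (simp add: W_scalar_def bW_def cls_add cls_mult)
qed

lemma rel_ba: "bW \<odot> aW = cW \<boxplus> sc (-1) \<odot> (aW \<odot> bW) \<boxplus> sc (- q1) \<odot> aW \<boxplus> sc (- p1) \<odot> bW"
proof -
  have "bW \<odot> aW = cls (gen_b \<otimes>\<^bsub>FreeAlg\<^esub> gen_a)"
    by (simp add: aW_def bW_def cls_mult)
  also have "gen_b \<otimes>\<^bsub>FreeAlg\<^esub> gen_a = c_free \<oplus>\<^bsub>FreeAlg\<^esub> fa_scalar (-1) \<otimes>\<^bsub>FreeAlg\<^esub> (gen_a \<otimes>\<^bsub>FreeAlg\<^esub> gen_b)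
      \<oplus>\<^bsub>FreeAlg\<^esub> fa_scalar (- q1) \<otimes>\<^bsub>FreeAlg\<^esub> gen_a \<oplus>\<^bsub>FreeAlg\<^esub> fa_scalar (- p1) \<otimes>\<^bsub>FreeAlg\<^esub> gen_b"
    by (simp add: c_free_def FreeAlg_simps fa_scalar_apply gen_a_eq_word gen_b_eq_word fa_mult_simps)
  finally show ?thesis
    by (simp add: W_scalar_def aW_def bW_def cW_def cls_add cls_mult c_free_carrier)
qed

text \<open>In the free algebra, \<open>c_free a - a c_free = b p(a) - p(a) b\<close> and
  \<open>c_free b - b c_free = a q(b) - q(b) a\<close>.\<close>

lemma cW_comm_a: "cW \<odot> aW = aW \<odot> cW"
proof -
  have "cls (c_free \<otimes>\<^bsub>FreeAlg\<^esub> gen_a) = cls (gen_a \<otimes>\<^bsub>FreeAlg\<^esub> c_free)"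
  proof (rule cls_eqI)
    have "(\<lambda>w. (c_free \<otimes>\<^bsub>FreeAlg\<^esub> gen_a) w - (gen_a \<otimes>\<^bsub>FreeAlg\<^esub> c_free) w)
        = gen_b \<otimes>\<^bsub>FreeAlg\<^esub> fa_eval p gen_a \<ominus>\<^bsub>FreeAlg\<^esub> fa_eval p gen_a \<otimes>\<^bsub>FreeAlg\<^esub> gen_b"
      by (simp add: fa_minus fa_eval_carrier)
         (simp add: eval_p_word c_free_def FreeAlg_simps gen_a_eq_word gen_b_eq_word fa_mult_simps,
          auto simp: fa_word_def)
    moreover have "gen_b \<otimes>\<^bsub>FreeAlg\<^esub> fa_eval p gen_a \<ominus>\<^bsub>FreeAlg\<^esub> fa_eval p gen_a \<otimes>\<^bsub>FreeAlg\<^esub> gen_b \<in> J"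
      by (simp add: eval_p_in_ideal J.I_l_closed J.I_r_closed J.a_subgroup additive_subgroup.a_subset
          a_minus_def J.a_closed J.a_inv_closed)
    ultimately show "(\<lambda>w. (c_free \<otimes>\<^bsub>FreeAlg\<^esub> gen_a) w - (gen_a \<otimes>\<^bsub>FreeAlg\<^esub> c_free) w) \<in> J"
      by simp
  qed (simp_all add: c_free_carrier)
  then show ?thesis by (simp add: aW_def cW_def cls_mult c_free_carrier)
qed

lemma cW_comm_b: "cW \<odot> bW = bW \<odot> cW"
proof -
  have "cls (c_free \<otimes>\<^bsub>FreeAlg\<^esub> gen_b) = cls (gen_b \<otimes>\<^bsub>FreeAlg\<^esub> c_free)"
  proof (rule cls_eqI)
    have "(\<lambda>w. (c_free \<otimes>\<^bsub>FreeAlg\<^esub> gen_b) w - (gen_b \<otimes>\<^bsub>FreeAlg\<^esub> c_free) w)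
        = gen_a \<otimes>\<^bsub>FreeAlg\<^esub> fa_eval q gen_b \<ominus>\<^bsub>FreeAlg\<^esub> fa_eval q gen_b \<otimes>\<^bsub>FreeAlg\<^esub> gen_a"
      by (simp add: fa_minus fa_eval_carrier)
         (simp add: eval_q_word c_free_def FreeAlg_simps gen_a_eq_word gen_b_eq_word fa_mult_simps,
          auto simp: fa_word_def)
    moreover have "gen_a \<otimes>\<^bsub>FreeAlg\<^esub> fa_eval q gen_b \<ominus>\<^bsub>FreeAlg\<^esub> fa_eval q gen_b \<otimes>\<^bsub>FreeAlg\<^esub> gen_a \<in> J"
      by (simp add: eval_q_in_ideal J.I_l_closed J.I_r_closed J.a_subgroup additive_subgroup.a_subset
          a_minus_def J.a_closed J.a_inv_closed)
    ultimately show "(\<lambda>w. (c_free \<otimes>\<^bsub>FreeAlg\<^esub> gen_b) w - (gen_b \<otimes>\<^bsub>FreeAlg\<^esub> c_free) w) \<in> J"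
      by simp
  qed (simp_all add: c_free_carrier)
  then show ?thesis by (simp add: bW_def cW_def cls_mult c_free_carrier)
qed

definition "poly_cW z = fold_coeffs (\<lambda>a acc. sc a \<boxplus> cW \<odot> acc) z \<zero>\<^sub>W"

lemma poly_cW_0[simp]: "poly_cW 0 = \<zero>\<^sub>W"
  by (simp add: poly_cW_def)

lemma poly_cW_pCons: "poly_cW (pCons a z) = sc a \<boxplus> cW \<odot> poly_cW z"
proof (cases "z = 0 \<and> a = 0")
  case True
  then show ?thesis by (simp add: sc_zero)
next
  case False
  then show ?thesis by (auto simp: poly_cW_def fold_coeffs_def cCons_def)
qed

lemma poly_cW_carrier[simp]: "poly_cW z \<in> carrier (W p q)"
  by (induction z) (simp_all add: poly_cW_pCons)

lemma poly_cW_add: "poly_cW (z + z') = poly_cW z \<boxplus> poly_cW z'"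
proof (induction z z' rule: poly_induct2)
  case 0
  then show ?case by simp
next
  case (pCons a z b z')
  have "poly_cW (pCons a z + pCons b z') = (sc a \<boxplus> sc b) \<boxplus> (cW \<odot> poly_cW z \<boxplus> cW \<odot> poly_cW z')"
    by (simp add: poly_cW_pCons sc_add pCons W.r_distr W.a_ac)
  also have "\<dots> = poly_cW (pCons a z) \<boxplus> poly_cW (pCons b z')"
    by (simp add: poly_cW_pCons W.a_ac)
  finally show ?case .
qed

lemma poly_cW_smult: "poly_cW (smult r z) = sc r \<odot> poly_cW z"
proof (induction z)
  case 0
  then show ?case by simp
next
  case (pCons a z)
  have "poly_cW (smult r (pCons a z)) = sc r \<odot> sc a \<boxplus> cW \<odot> (sc r \<odot> poly_cW z)"
    by (simp add: poly_cW_pCons sc_mult pCons.IH)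
  also have "\<dots> = sc r \<odot> sc a \<boxplus> sc r \<odot> (cW \<odot> poly_cW z)"
    by (simp add: W.m_assoc[symmetric] sc_comm[of cW])
  also have "\<dots> = sc r \<odot> poly_cW (pCons a z)"
    by (simp add: poly_cW_pCons W.r_distr)
  finally show ?case .
qed

lemma poly_cW_mult: "poly_cW (z * z') = poly_cW z \<odot> poly_cW z'"
proof (induction z)
  case 0
  then show ?case by simp
next
  case (pCons a z)
  have "poly_cW (pCons a z * z') = sc a \<odot> poly_cW z' \<boxplus> (sc 0 \<boxplus> cW \<odot> (poly_cW z \<odot> poly_cW z'))"
    by (simp add: poly_cW_add poly_cW_smult poly_cW_pCons pCons.IH)
  also have "\<dots> = poly_cW (pCons a z) \<odot> poly_cW z'"
    by (simp add: poly_cW_pCons sc_zero W.l_distr W.m_assoc)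
  finally show ?case .
qed

lemma poly_cW_const: "poly_cW [:r:] = sc r"
  by (simp add: poly_cW_pCons)

lemma poly_cW_one: "poly_cW 1 = \<one>\<^sub>W"
  by (simp add: pCons_one[symmetric] poly_cW_const sc_one del: pCons_one)

lemma poly_cW_X: "poly_cW [:0, 1:] = cW"
  by (simp add: poly_cW_pCons sc_zero sc_one)

lemma poly_cW_comm:
  assumes Y: "Y \<in> carrier (W p q)" and cY: "cW \<odot> Y = Y \<odot> cW"
  shows "poly_cW z \<odot> Y = Y \<odot> poly_cW z"
proof (induction z)
  case 0
  then show ?case using Y by simp
next
  case (pCons a z)
  have "poly_cW (pCons a z) \<odot> Y = sc a \<odot> Y \<boxplus> cW \<odot> (poly_cW z \<odot> Y)"
    using Y by (simp add: poly_cW_pCons W.l_distr W.m_assoc)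
  also have "\<dots> = Y \<odot> sc a \<boxplus> (cW \<odot> Y) \<odot> poly_cW z"
    using Y by (simp add: pCons.IH sc_comm[of Y] W.m_assoc)
  also have "\<dots> = Y \<odot> poly_cW (pCons a z)"
    using Y by (simp add: cY poly_cW_pCons W.r_distr W.m_assoc)
  finally show ?case .
qed

lemma poly_cW_comm_a: "poly_cW z \<odot> aW = aW \<odot> poly_cW z"
  by (rule poly_cW_comm) (simp_all add: cW_comm_a)
lemma poly_cW_comm_b: "poly_cW z \<odot> bW = bW \<odot> poly_cW z"
  by (rule poly_cW_comm) (simp_all add: cW_comm_b)

definition "nf z0 z1 z2 z3 = poly_cW z0 \<boxplus> poly_cW z1 \<odot> aW \<boxplus> poly_cW z2 \<odot> bW \<boxplus> poly_cW z3 \<odot> (aW \<odot> bW)"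

lemma nf_carrier[simp]: "nf z0 z1 z2 z3 \<in> carrier (W p q)"
  by (simp add: nf_def)

lemma nf_add: "nf a0 a1 a2 a3 \<boxplus> nf b0 b1 b2 b3 = nf (a0 + b0) (a1 + b1) (a2 + b2) (a3 + b3)"
  by (simp add: nf_def poly_cW_add W.l_distr W.a_ac)

lemma nf_poly_cW_mult: "poly_cW w \<odot> nf z0 z1 z2 z3 = nf (w * z0) (w * z1) (w * z2) (w * z3)"
  by (simp add: nf_def W.r_distr W.m_assoc[symmetric] poly_cW_mult)

lemma nf_zero: "nf 0 0 0 0 = \<zero>\<^sub>W"
  by (simp add: nf_def)

lemma nf_one: "nf 1 0 0 0 = \<one>\<^sub>W" by (simp add: nf_def poly_cW_one)
lemma nf_a: "nf 0 1 0 0 = aW" by (simp add: nf_def poly_cW_one)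
lemma nf_b: "nf 0 0 1 0 = bW" by (simp add: nf_def poly_cW_one)
lemma nf_ab: "nf 0 0 0 1 = aW \<odot> bW" by (simp add: nf_def poly_cW_one)

lemma nf_aa: "aW \<odot> aW = nf [:- p0:] [:- p1:] 0 0"
  by (simp add: nf_def rel_aa poly_cW_const)

lemma nf_a_ab: "aW \<odot> (aW \<odot> bW) = nf 0 0 [:- p0:] [:- p1:]"
proof -
  have "aW \<odot> (aW \<odot> bW) = (aW \<odot> aW) \<odot> bW" by (simp add: W.m_assoc)
  also have "\<dots> = sc (- p0) \<odot> bW \<boxplus> sc (- p1) \<odot> (aW \<odot> bW)"
    by (simp add: rel_aa W.l_distr W.m_assoc)
  finally show ?thesis by (simp add: nf_def poly_cW_const)
qed

lemma aW_poly_cW_commute: "e \<in> carrier (W p q) \<Longrightarrow> aW \<odot> (poly_cW z \<odot> e) = poly_cW z \<odot> (aW \<odot> e)"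
  by (simp add: W.m_assoc[symmetric] poly_cW_comm_a)
lemma bW_poly_cW_commute: "e \<in> carrier (W p q) \<Longrightarrow> bW \<odot> (poly_cW z \<odot> e) = poly_cW z \<odot> (bW \<odot> e)"
  by (simp add: W.m_assoc[symmetric] poly_cW_comm_b)

lemma nf_aW_mult: "aW \<odot> nf z0 z1 z2 z3 = nf (-[:p0:] * z1) (z0 - [:p1:] * z1) (-[:p0:] * z3) (z2 - [:p1:] * z3)"
proof -
  have "aW \<odot> nf z0 z1 z2 z3 = poly_cW z0 \<odot> aW \<boxplus> poly_cW z1 \<odot> (aW \<odot> aW) \<boxplus> poly_cW z2 \<odot> (aW \<odot> bW)
      \<boxplus> poly_cW z3 \<odot> (aW \<odot> (aW \<odot> bW))"
    by (simp add: nf_def W.r_distr aW_poly_cW_commute poly_cW_comm_a[symmetric])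
  also have "\<dots> = poly_cW z0 \<odot> nf 0 1 0 0 \<boxplus> poly_cW z1 \<odot> nf [:- p0:] [:- p1:] 0 0 \<boxplus> poly_cW z2 \<odot> nf 0 0 0 1
      \<boxplus> poly_cW z3 \<odot> nf 0 0 [:- p0:] [:- p1:]"
    by (simp only: nf_a nf_aa nf_ab nf_a_ab)
  also have "\<dots> = nf (-[:p0:] * z1) (z0 - [:p1:] * z1) (-[:p0:] * z3) (z2 - [:p1:] * z3)"
    unfolding nf_poly_cW_mult nf_add by (simp add: algebra_simps)
  finally show ?thesis .
qed

lemma nf_bb: "bW \<odot> bW = nf [:- q0:] 0 [:- q1:] 0"
  by (simp add: nf_def rel_bb poly_cW_const)

lemma nf_ba: "bW \<odot> aW = nf [:0, 1:] [:- q1:] [:- p1:] [:- 1:]"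
  by (simp add: nf_def rel_ba poly_cW_const poly_cW_X W.a_ac)

lemma nf_mult_bW: "nf z0 z1 z2 z3 \<odot> bW = nf (-[:q0:] * z2) (-[:q0:] * z3) (z0 - [:q1:] * z2) (z1 - [:q1:] * z3)"
proof -
  have "nf z0 z1 z2 z3 \<odot> bW = poly_cW z0 \<odot> bW \<boxplus> poly_cW z1 \<odot> (aW \<odot> bW) \<boxplus> poly_cW z2 \<odot> (bW \<odot> bW)
      \<boxplus> poly_cW z3 \<odot> (aW \<odot> (bW \<odot> bW))"
    by (simp add: nf_def W.l_distr W.m_assoc)
  also have "\<dots> = poly_cW z0 \<odot> nf 0 0 1 0 \<boxplus> poly_cW z1 \<odot> nf 0 0 0 1 \<boxplus> poly_cW z2 \<odot> nf [:- q0:] 0 [:- q1:] 0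
      \<boxplus> poly_cW z3 \<odot> nf (-[:p0:] * 0) ([:- q0:] - [:p1:] * 0) (-[:p0:] * 0) ([:- q1:] - [:p1:] * 0)"
    by (simp only: nf_b nf_ab nf_bb nf_aW_mult)
  also have "\<dots> = nf (-[:q0:] * z2) (-[:q0:] * z3) (z0 - [:q1:] * z2) (z1 - [:q1:] * z3)"
    unfolding nf_poly_cW_mult nf_add by (simp add: algebra_simps)
  finally show ?thesis .
qed

lemma nf_b_ab: "bW \<odot> (aW \<odot> bW) = nf [:p1 * q0:] [:q0:] [:p1 * q1, 1:] 0"
proof -
  have "bW \<odot> (aW \<odot> bW) = (bW \<odot> aW) \<odot> bW" by (simp add: W.m_assoc)
  also have "\<dots> = nf [:p1 * q0:] [:q0:] [:p1 * q1, 1:] 0"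
    unfolding nf_ba nf_mult_bW by (simp add: algebra_simps)
  finally show ?thesis .
qed

lemma nf_bW_mult: "bW \<odot> nf z0 z1 z2 z3 =
  nf ([:0,1:] * z1 - [:q0:] * z2 + [:p1 * q0:] * z3) (- [:q1:] * z1 + [:q0:] * z3)
     (z0 - [:p1:] * z1 - [:q1:] * z2 + [:p1 * q1, 1:] * z3) (- z1)"
proof -
  have "bW \<odot> nf z0 z1 z2 z3 = poly_cW z0 \<odot> bW \<boxplus> poly_cW z1 \<odot> (bW \<odot> aW) \<boxplus> poly_cW z2 \<odot> (bW \<odot> bW)
      \<boxplus> poly_cW z3 \<odot> (bW \<odot> (aW \<odot> bW))"
    by (simp add: nf_def W.r_distr bW_poly_cW_commute poly_cW_comm_b[symmetric])
  also have "\<dots> = poly_cW z0 \<odot> nf 0 0 1 0 \<boxplus> poly_cW z1 \<odot> nf [:0, 1:] [:- q1:] [:- p1:] [:- 1:]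
      \<boxplus> poly_cW z2 \<odot> nf [:- q0:] 0 [:- q1:] 0 \<boxplus> poly_cW z3 \<odot> nf [:p1 * q0:] [:q0:] [:p1 * q1, 1:] 0"
    by (simp only: nf_b nf_ba nf_bb nf_b_ab)
  also have "\<dots> = nf ([:0,1:] * z1 - [:q0:] * z2 + [:p1 * q0:] * z3) (- [:q1:] * z1 + [:q0:] * z3)
     (z0 - [:p1:] * z1 - [:q1:] * z2 + [:p1 * q1, 1:] * z3) (- z1)"
    unfolding nf_poly_cW_mult nf_add by (simp add: algebra_simps)
  finally show ?thesis .
qed

lemma nf_span_word: "\<exists>z0 z1 z2 z3. cls (fa_word w) = nf z0 z1 z2 z3"
proof (induction w)
  case Nil
  then show ?case using nf_one by (metis fa_one_eq_word cls_one)
next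
  case (Cons x w)
  then obtain z0 z1 z2 z3 where z: "cls (fa_word w) = nf z0 z1 z2 z3" by blast
  have "(fa_word (x # w) :: bool list \<Rightarrow> 'f) = fa_word [x] \<otimes>\<^bsub>FreeAlg\<^esub> fa_word w" by (simp add: fa_word_mult)
  then have "cls (fa_word (x # w)) = cls (fa_word [x]) \<odot> nf z0 z1 z2 z3"
    using z by (simp add: cls_mult)
  then show ?case
    by (cases x) (auto simp: gen_a_eq_word[symmetric] gen_b_eq_word[symmetric] aW_def[symmetric] bW_def[symmetric]
        nf_aW_mult nf_bW_mult)
qed

lemma nf_span_finsum:
  assumes "finite A" "g \<in> A \<rightarrow> carrier FreeAlg" "\<And>a. a \<in> A \<Longrightarrow> \<exists>z0 z1 z2 z3. cls (g a) = nf z0 z1 z2 z3"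
  shows "\<exists>z0 z1 z2 z3. cls (finsum FreeAlg g A) = nf z0 z1 z2 z3"
  using assms
proof (induction A rule: finite_induct)
  case empty
  then show ?case using nf_zero by (metis FA.finsum_empty cls_zero)
next
  case (insert x F)
  then have e: "finsum FreeAlg g (insert x F) = g x \<oplus>\<^bsub>FreeAlg\<^esub> finsum FreeAlg g F"
    by (intro FA.finsum_insert) auto
  obtain a0 a1 a2 a3 where a: "cls (g x) = nf a0 a1 a2 a3" using insert by blast
  obtain b0 b1 b2 b3 where b: "cls (finsum FreeAlg g F) = nf b0 b1 b2 b3" using insert by auto
  have "cls (finsum FreeAlg g (insert x F)) = nf a0 a1 a2 a3 \<boxplus> nf b0 b1 b2 b3"
    unfolding e using insert a b by (subst cls_add) (auto intro: FA.finsum_closed)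
  then show ?case by (auto simp: nf_add)
qed

lemma nf_span:
  assumes "f \<in> carrier FreeAlg"
  shows "\<exists>z0 z1 z2 z3. cls f = nf z0 z1 z2 z3"
proof -
  have fin: "finite {w. f w \<noteq> 0}" using assms by (simp add: FreeAlg_carrier)
  have "\<exists>z0 z1 z2 z3. cls (fa_smult (f w) (fa_word w)) = nf z0 z1 z2 z3" for w
  proof -
    obtain z0 z1 z2 z3 where z: "cls (fa_word w) = nf z0 z1 z2 z3" using nf_span_word by blast
    have "cls (fa_smult (f w) (fa_word w)) = poly_cW [:f w:] \<odot> nf z0 z1 z2 z3"
      by (simp add: fa_scalar_mult_left[symmetric] cls_mult z poly_cW_const W_scalar_def)
    then show ?thesis by (auto simp: nf_poly_cW_mult)
  qed
  then show ?thesis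
    using fa_word_expansion[OF assms] nf_span_finsum[OF fin, of "\<lambda>w. fa_smult (f w) (fa_word w)"] by auto
qed

end

section \<open>A faithful representation of \<open>W p q\<close>\<close>

lemma mat2_companion_system:
  fixes g0 g1 g2 g3 P0 P1 x y z :: "'a::comm_ring_1"
  assumes "mscal g0 + mscal g1 * Mat2 0 (- P0) 1 (- P1) + mscal g2 * Mat2 x y 1 z
      + mscal g3 * (Mat2 0 (- P0) 1 (- P1) * Mat2 x y 1 z) = 0"
  shows "g0 = P0 * g3 - x * g2" and "g1 = - g2 - (x - P1) * g3"
    and "(P0 + y) * g2 + P0 * (x - P1 - z) * g3 = 0"
    and "(P1 - x + z) * g2 + (P0 + P1 * x - P1 * P1 + y - P1 * z) * g3 = 0"
proof -
  have e11: "g0 + g2 * x - g3 * P0 = 0"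
    and e12: "- g1 * P0 + g2 * y - g3 * P0 * z = 0"
    and e21: "g1 + g2 + g3 * (x - P1) = 0"
    and e22: "g0 - g1 * P1 + g2 * z + g3 * (y - P1 * z) = 0"
    using arg_cong[OF assms, of m11] arg_cong[OF assms, of m12]
      arg_cong[OF assms, of m21] arg_cong[OF assms, of m22]
    by (simp_all add: mscal_def mat2_zero_one algebra_simps)
  have "g0 = g0 - (g0 + g2 * x - g3 * P0)" using e11 by simp
  also have "\<dots> = P0 * g3 - x * g2" by (simp add: algebra_simps)
  finally show "g0 = P0 * g3 - x * g2" .
  have "g1 = g1 - (g1 + g2 + g3 * (x - P1))" using e21 by simp
  also have "\<dots> = - g2 - (x - P1) * g3" by (simp add: algebra_simps)
  finally show "g1 = - g2 - (x - P1) * g3" .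
  have "(P0 + y) * g2 + P0 * (x - P1 - z) * g3
      = (- g1 * P0 + g2 * y - g3 * P0 * z) + P0 * (g1 + g2 + g3 * (x - P1))"
    by (simp add: algebra_simps)
  then show "(P0 + y) * g2 + P0 * (x - P1 - z) * g3 = 0"
    using e12 e21 by simp
  have "(P1 - x + z) * g2 + (P0 + P1 * x - P1 * P1 + y - P1 * z) * g3
      = (g0 - g1 * P1 + g2 * z + g3 * (y - P1 * z)) - (g0 + g2 * x - g3 * P0)
        + P1 * (g1 + g2 + g3 * (x - P1))"
    by (simp add: algebra_simps)
  then show "(P1 - x + z) * g2 + (P0 + P1 * x - P1 * P1 + y - P1 * z) * g3 = 0"
    using e11 e21 e22 by simp
qed

lemma linear_system_2x2_trivial:
  fixes a b c d u v :: "'a::idom"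
  assumes "a * u + b * v = 0" and "c * u + d * v = 0" and "a * d \<noteq> b * c"
  shows "u = 0" and "v = 0"
proof -
  have "(a * d - b * c) * u = d * (a * u + b * v) - b * (c * u + d * v)"
    by (simp add: algebra_simps)
  then have "(a * d - b * c) * u = 0"
    using assms(1,2) by simp
  then show "u = 0"
    using assms(3) by simp
  have "(a * d - b * c) * v = a * (c * u + d * v) - c * (a * u + b * v)"
    by (simp add: algebra_simps)
  then have "(a * d - b * c) * v = 0"
    using assms(1,2) by simp
  then show "v = 0"
    using assms(3) by simp
qed

context quadratic_pair
begin

text \<open>\<open>Ma\<close> is the companion matrix of \<open>p\<close>; \<open>Mb\<close> has trace \<open>-q1\<close> and determinant \<open>q0\<close>,
  hence is a root of \<open>q\<close>.\<close>

definition "Ma = Mat2 0 (- [:p0:]) 1 (- [:p1:])"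
definition "Mb = Mat2 [:0, 1:] (- [:q0, q1, 1:]) 1 (- [:q1, 1:])"

abbreviation "psi \<equiv> mat_rep (\<lambda>x. if x then Mb else Ma)"

lemma psi_gen: "psi gen_a = Ma" "psi gen_b = Mb"
  by (simp_all add: mat_rep_gen)

lemma psi_ideal:
  assumes "f \<in> J"
  shows "psi f = 0"
proof -
  have "psi (fa_eval p gen_a) = 0"
    by (simp add: fa_mat_hom_eval_p fa_mat_hom_mat_rep psi_gen Ma_def mscal_def mat2_zero_one
        algebra_simps)
  moreover have "psi (fa_eval q gen_b) = 0"
    by (simp add: fa_mat_hom_eval_q fa_mat_hom_mat_rep psi_gen Mb_def mscal_def mat2_zero_one
        algebra_simps)
  ultimately show ?thesis
    using assms W_ideal_subset_kernel[OF fa_mat_hom_mat_rep] by blast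
qed

lemma psi_star: "f \<in> carrier FreeAlg \<Longrightarrow> psi (fa_star p q f) = madj (psi f)"
  by (rule fa_mat_hom_star[OF fa_mat_hom_mat_rep])
     (simp_all add: psi_gen Ma_def Mb_def mtr_def tr_def p1_def q1_def)

definition "psiW X = psi (SOME r. r \<in> X)"

lemma psiW_cls:
  assumes "f \<in> carrier FreeAlg"
  shows "psiW (cls f) = psi f"
proof -
  have "f \<in> cls f" using assms by (rule J.a_rcos_self)
  then have "(SOME r. r \<in> cls f) \<in> cls f" by (rule someI[of "\<lambda>r. r \<in> cls f"])
  then obtain i where i: "i \<in> J" "(SOME r. r \<in> cls f) = i \<oplus>\<^bsub>FreeAlg\<^esub> f"
    unfolding a_r_coset_def' by auto
  have "i \<in> carrier FreeAlg" using i(1) J.a_subset by blast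
  then show ?thesis
    unfolding psiW_def i(2) using assms i(1) by (simp add: mat_rep_add psi_ideal)
qed

lemma psiW_add: "X \<in> carrier (W p q) \<Longrightarrow> Y \<in> carrier (W p q) \<Longrightarrow> psiW (X \<boxplus> Y) = psiW X + psiW Y"
  by (elim W_carrier_E) (simp add: cls_add[symmetric] psiW_cls mat_rep_add)

lemma psiW_mult: "X \<in> carrier (W p q) \<Longrightarrow> Y \<in> carrier (W p q) \<Longrightarrow> psiW (X \<odot> Y) = psiW X * psiW Y"
  by (elim W_carrier_E) (simp add: cls_mult[symmetric] psiW_cls mat_rep_mult)

lemma psiW_one: "psiW \<one>\<^sub>W = 1"
  using psiW_cls[OF FA.one_closed] fa_mat_homD(3)[OF fa_mat_hom_mat_rep] by (simp add: cls_one)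

lemma psiW_zero: "psiW \<zero>\<^sub>W = 0"
  using psiW_cls[OF FA.zero_closed] by (simp add: cls_zero mat_rep_zero)

lemma psiW_sc: "psiW (sc r) = mscal [:r:]"
  by (simp add: W_scalar_def psiW_cls fa_mat_hom_scalar[OF fa_mat_hom_mat_rep])

lemma psiW_aW: "psiW aW = Ma" and psiW_bW: "psiW bW = Mb"
  by (simp_all add: aW_def bW_def psiW_cls psi_gen)

definition "\<gamma> = [:- p0 - q0, p1 - q1, -1:]"

lemma degree_\<gamma>: "degree \<gamma> = 2"
  by (simp add: \<gamma>_def)

lemma psiW_cW: "psiW cW = mscal \<gamma>"
proof -
  have "psi c_free = Ma * Mb + Mb * Ma + mscal [:q1:] * Ma + mscal [:p1:] * Mb"
    by (simp add: c_free_eq mat_rep_add mat_rep_smult mat_rep_word word_mat_def)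
  then show ?thesis
    by (simp add: cW_def psiW_cls c_free_carrier Ma_def Mb_def mscal_def \<gamma>_def algebra_simps)
qed

lemma psiW_poly_cW: "psiW (poly_cW z) = mscal (pcompose z \<gamma>)"
  by (induction z)
     (simp_all add: poly_cW_pCons psiW_zero psiW_add psiW_mult psiW_sc psiW_cW pcompose_pCons
       mscal_add mscal_mult)

lemma psiW_nf:
  "psiW (nf z0 z1 z2 z3) = mscal (pcompose z0 \<gamma>) + mscal (pcompose z1 \<gamma>) * Ma
     + mscal (pcompose z2 \<gamma>) * Mb + mscal (pcompose z3 \<gamma>) * (Ma * Mb)"
  by (simp add: nf_def psiW_add psiW_mult psiW_aW psiW_bW psiW_poly_cW)

lemma nf_matrices_independent:
  assumes "mscal g0 + mscal g1 * Ma + mscal g2 * Mb + mscal g3 * (Ma * Mb) = 0"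
  shows "g0 = 0 \<and> g1 = 0 \<and> g2 = 0 \<and> g3 = 0"
proof -
  define U where "U = [:p0:] - [:q0, q1, 1:]"
  define V where "V = [:p0:] * ([:0, 1:] - [:p1:] + [:q1, 1:])"
  define S where "S = [:p1:] - [:0, 1:] - [:q1, 1:]"
  define T where "T = [:p0:] + [:p1:] * [:0, 1:] - [:p1:] * [:p1:] - [:q0, q1, 1:] + [:p1:] * [:q1, 1:]"
  note sys = mat2_companion_system[OF assms[unfolded Ma_def Mb_def]]
  have "U * g2 + V * g3 = 0" "S * g2 + T * g3 = 0"
    using sys(3,4) by (simp_all add: U_def V_def S_def T_def algebra_simps)
  moreover have "U * T \<noteq> V * S"
  proof -
    have "U = [:p0 - q0, - q1, -1:]" "T = [:p0 - p1 * p1 + p1 * q1 - q0, 2 * p1 - q1, -1:]"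
      by (simp_all add: U_def T_def algebra_simps)
    then have "degree (U * T) = 4"
      by (subst degree_mult_eq) auto
    moreover have "degree V \<le> 1" "degree S \<le> 1"
      unfolding V_def S_def by (auto intro!: order.trans[OF degree_mult_le] degree_diff_le degree_add_le)
    then have "degree (V * S) \<le> 2"
      by (intro order.trans[OF degree_mult_le]) simp
    ultimately show ?thesis by auto
  qed
  ultimately have "g2 = 0" "g3 = 0"
    by (rule linear_system_2x2_trivial)+
  with sys(1,2) show ?thesis by simp
qed

text \<open>Write \<open>cls d\<close> in normal form: the images of \<open>1, a, b, ab\<close> are independent, and
  \<open>z \<mapsto> z \<circ>\<^sub>p \<gamma>\<close> is injective because \<open>\<gamma>\<close> has degree 2.\<close>

lemma psi_kernel:
  assumes d: "d \<in> carrier FreeAlg" and zero: "psi d = 0"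
  shows "d \<in> J"
proof -
  obtain z0 z1 z2 z3 where e: "cls d = nf z0 z1 z2 z3" using nf_span[OF d] by blast
  have "psiW (cls d) = 0" using zero d by (simp add: psiW_cls)
  then have "pcompose z0 \<gamma> = 0 \<and> pcompose z1 \<gamma> = 0 \<and> pcompose z2 \<gamma> = 0 \<and> pcompose z3 \<gamma> = 0"
    by (intro nf_matrices_independent) (simp add: e psiW_nf)
  then have "z0 = 0 \<and> z1 = 0 \<and> z2 = 0 \<and> z3 = 0"
    using pcompose_eq_0[of _ \<gamma>] degree_\<gamma> by auto
  then have "cls d = J" using e nf_zero W_zero_eq by simp
  then show ?thesis using J.a_rcos_self[OF d] by simp
qed

lemma psiW_inj:
  assumes X: "X \<in> carrier (W p q)" and Y: "Y \<in> carrier (W p q)" and eq: "psiW X = psiW Y"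
  shows "X = Y"
proof -
  obtain x where x: "x \<in> carrier FreeAlg" "X = cls x" using X by (rule W_carrier_E)
  obtain y where y: "y \<in> carrier FreeAlg" "Y = cls y" using Y by (rule W_carrier_E)
  have "psi (x \<ominus>\<^bsub>FreeAlg\<^esub> y) = psi x - psi y"
    using x y by (simp add: a_minus_def mat_rep_add fa_mat_hom_neg[OF fa_mat_hom_mat_rep])
  also have "\<dots> = 0" using eq x y by (simp add: psiW_cls)
  finally have "x \<ominus>\<^bsub>FreeAlg\<^esub> y \<in> J" using x y by (intro psi_kernel) auto
  then show ?thesis using x y cls_eq_iff by simp
qed

lemma W_star_carrier: "X \<in> carrier (W p q) \<Longrightarrow> W_star p q X \<in> carrier (W p q)"
  using cls_some_rep[of X] by (simp add: W_star_def cls_carrier fa_star_carrier)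

lemma psiW_W_star:
  assumes "X \<in> carrier (W p q)"
  shows "psiW (W_star p q X) = madj (psiW X)"
proof -
  define x where "x = (SOME r. r \<in> X)"
  have x: "x \<in> carrier FreeAlg" "cls x = X"
    using cls_some_rep[OF assms] by (simp_all add: x_def)
  have "psiW (W_star p q X) = psi (fa_star p q x)"
    by (simp add: W_star_def x_def[symmetric] psiW_cls fa_star_carrier x(1))
  also have "\<dots> = madj (psi x)"
    by (rule psi_star[OF x(1)])
  also have "\<dots> = madj (psiW X)"
    by (simp add: x(2)[symmetric] psiW_cls x(1))
  finally show ?thesis .
qed

end

locale W_injective_endo = quadratic_pair +
  fixes \<Phi>
  assumes endo: "W_alg_endo p q \<Phi>" and inj: "inj_on \<Phi> (carrier (W p q))"
begin

lemma Phi_hom: "\<Phi> \<in> ring_hom (W p q) (W p q)"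
  using endo by (simp add: W_alg_endo_def)

lemma Phi_carrier: "X \<in> carrier (W p q) \<Longrightarrow> \<Phi> X \<in> carrier (W p q)"
  using ring_hom_closed[OF Phi_hom] .

lemma Phi_sc_mult: "X \<in> carrier (W p q) \<Longrightarrow> \<Phi> (sc c \<odot> X) = sc c \<odot> \<Phi> X"
  using endo by (simp add: W_alg_endo_def W_smult_eq)

definition "\<chi> f = psiW (\<Phi> (cls f))"

lemma fa_mat_hom_\<chi>: "fa_mat_hom \<chi>"
  unfolding fa_mat_hom_def
proof (intro conjI ballI allI)
  fix f g :: "bool list \<Rightarrow> 'a"
  assume f: "f \<in> carrier FreeAlg" and g: "g \<in> carrier FreeAlg"
  show "\<chi> (f \<oplus>\<^bsub>FreeAlg\<^esub> g) = \<chi> f + \<chi> g"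
    using f g by (simp add: \<chi>_def cls_add ring_hom_add[OF Phi_hom] cls_carrier psiW_add Phi_carrier)
  show "\<chi> (f \<otimes>\<^bsub>FreeAlg\<^esub> g) = \<chi> f * \<chi> g"
    using f g by (simp add: \<chi>_def cls_mult ring_hom_mult[OF Phi_hom] cls_carrier psiW_mult Phi_carrier)
next
  show "\<chi> \<one>\<^bsub>FreeAlg\<^esub> = 1"
    by (simp add: \<chi>_def cls_one ring_hom_one[OF Phi_hom] psiW_one)
next
  fix c :: 'a and f :: "bool list \<Rightarrow> 'a"
  assume f: "f \<in> carrier FreeAlg"
  then have "cls (fa_smult c f) = sc c \<odot> cls f"
    by (simp add: W_scalar_def cls_mult fa_scalar_mult_left[symmetric])
  then show "\<chi> (fa_smult c f) = mscal [:c:] * \<chi> f"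
    using f by (simp add: \<chi>_def Phi_sc_mult cls_carrier psiW_mult psiW_sc Phi_carrier)
qed

lemma \<chi>_ideal: "f \<in> J \<Longrightarrow> \<chi> f = 0"
  by (simp add: \<chi>_def cls_ideal ring_hom_zero[OF Phi_hom ring_W ring_W] psiW_zero)

lemma \<chi>_nonconst:
  assumes g: "g \<in> carrier FreeAlg" and nonconst: "psi g \<noteq> mscal [:r:]"
  shows "\<chi> g \<noteq> mscal [:r:]"
proof
  assume "\<chi> g = mscal [:r:]"
  then have "psiW (\<Phi> (cls g)) = psiW (\<Phi> (sc r))"
    by (simp add: \<chi>_def psiW_cls fa_mat_hom_scalar[OF fa_mat_hom_\<chi>, symmetric] W_scalar_def)
  then have "\<Phi> (cls g) = \<Phi> (sc r)"
    using g by (intro psiW_inj) (auto intro: Phi_carrier cls_carrier)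
  then have "cls g = sc r"
    using inj g by (auto dest: inj_onD intro: cls_carrier)
  then have "psiW (cls g) = psiW (sc r)" by simp
  with nonconst g show False by (simp add: psiW_cls psiW_sc)
qed

text \<open>Since \<open>\<Phi>\<close> and \<open>psiW\<close> are injective, \<open>\<chi> a\<close> is, like \<open>psi a\<close>, not a constant scalar;
  being a root of \<open>p\<close>, it has the trace of \<open>p\<close>.\<close>

lemma mtr_\<chi>_gen: "mtr (\<chi> gen_a) = [:tr p:]" "mtr (\<chi> gen_b) = [:tr q:]"
proof -
  have "mscal [:p0:] + mscal [:p1:] * \<chi> gen_a + \<chi> gen_a * \<chi> gen_a = 0"
    using \<chi>_ideal[OF eval_p_in_ideal] by (simp add: fa_mat_hom_eval_p[OF fa_mat_hom_\<chi>])
  moreover have "\<chi> gen_a \<noteq> mscal [:r:]" for r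
    by (rule \<chi>_nonconst) (simp_all add: psi_gen Ma_def mscal_def)
  ultimately show "mtr (\<chi> gen_a) = [:tr p:]"
    by (simp add: mat2_poly_quadratic_root_trace tr_def p1_def)
  have "mscal [:q0:] + mscal [:q1:] * \<chi> gen_b + \<chi> gen_b * \<chi> gen_b = 0"
    using \<chi>_ideal[OF eval_q_in_ideal] by (simp add: fa_mat_hom_eval_q[OF fa_mat_hom_\<chi>])
  moreover have "\<chi> gen_b \<noteq> mscal [:r:]" for r
    by (rule \<chi>_nonconst) (simp_all add: psi_gen Mb_def mscal_def)
  ultimately show "mtr (\<chi> gen_b) = [:tr q:]"
    by (simp add: mat2_poly_quadratic_root_trace tr_def q1_def)
qed

lemma Phi_W_star:
  assumes X: "X \<in> carrier (W p q)"
  shows "\<Phi> (W_star p q X) = W_star p q (\<Phi> X)"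
proof (rule psiW_inj)
  define x where "x = (SOME r. r \<in> X)"
  have x: "x \<in> carrier FreeAlg" "cls x = X"
    using cls_some_rep[OF X] by (simp_all add: x_def)
  have "psiW (\<Phi> (W_star p q X)) = \<chi> (fa_star p q x)"
    by (simp add: \<chi>_def W_star_def x_def)
  also have "\<dots> = madj (\<chi> x)"
    by (rule fa_mat_hom_star[OF fa_mat_hom_\<chi> mtr_\<chi>_gen x(1)])
  also have "\<dots> = psiW (W_star p q (\<Phi> X))"
    by (simp add: \<chi>_def x(2) psiW_W_star Phi_carrier X)
  finally show "psiW (\<Phi> (W_star p q X)) = psiW (W_star p q (\<Phi> X))" .
qed (simp_all add: X Phi_carrier W_star_carrier)

end

theorem mainTheorem18:
  fixes p q :: "'f::field poly"
    and \<Phi> :: "(bool list \<Rightarrow> 'f) set \<Rightarrow> (bool list \<Rightarrow> 'f) set"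
  assumes "lead_coeff p = 1" and "degree p = 2"
    and "lead_coeff q = 1" and "degree q = 2"
    and "W_alg_endo p q \<Phi>"
    and "inj_on \<Phi> (carrier (W p q))"
  shows "\<forall>x\<in>carrier (W p q). \<Phi> (W_star p q x) = W_star p q (\<Phi> x)"
proof -
  interpret W_injective_endo p q \<Phi>
    by unfold_locales (use assms in auto)
  show ?thesis
    using Phi_W_star by blast
qed
end
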